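(* Let $Y,Z$ be rearrangement invariant Banach function spaces over $(0,\infty)$. (i) If $Z\cap L^{\infty}\subset Y\cap L^{\infty}$, then for each nonincreasing $f=f^*\in Y^{1/2}Z^{1/2}$ of the form $f=\sum_{k=1}^\infty c_k\chi_{[k-1,k)}$ there exist nonincreasing $g=g^*\in Y$ and $h=h^*\in Z$ of the form $g=\sum_{k=1}^\infty a_k\chi_{[k-1,k)}$, $h=\sum_{k=1}^\infty b_k\chi_{[k-1,k)}$ such that $f\le g^{1/2}h^{1/2}$ and $h\le g$. (ii) If $Z\cap L^{1}\subset Y\cap L^{1}$, then for each nonincreasing $f=f^*\in Y^{1/2}Z^{1/2}$ with $\operatorname{supp} f\subset[0,1]$ there exist nonincreasing $g=g^*\in Y$ and $h=h^*\in Z$ such that $f\le g^{1/2}h^{1/2}$ and $h\le g$.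
   Context: A Banach function space over $(0,\infty)$ with Lebesgue measure is a Banach space of a.e. finite measurable functions with the ideal property ($|f|\le g$, $g\in X$ implies $f\in X$, $\|f\|_X\le\|g\|_X$) and the Fatou property ($0\le f_n\uparrow f$ a.e., $\sup_n\|f_n\|_X<\infty$ implies $f\in X$, $\|f\|_X=\sup_n\|f_n\|_X$); it is rearrangement invariant if equimeasurable functions have equal norms. $f^*$ denotes the nonincreasing rearrangement, so $f=f^*$ means $f$ is nonnegative, nonincreasing and right-continuous. The Calderón–Lozanovskii space $Y^{1/2}Z^{1/2}$ consists of all $f$ with $|f|\le g^{1/2}h^{1/2}$ for some $0\le g\in Y$, $0\le h\in Z$. *)

theory Defs
  imports "HOL-Analysis.Analysis"
begin

definition M0 :: "real measure" where
  "M0 = lebesgue_on {0<..}"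

text \<open>Banach function space (X, N) over (0,infinity): a normed space of (a.e. finite,
  here real-valued) measurable functions, complete, with the ideal and Fatou properties.\<close>
definition bfs :: "(real \<Rightarrow> real) set \<Rightarrow> ((real \<Rightarrow> real) \<Rightarrow> real) \<Rightarrow> bool" where
  "bfs X N \<longleftrightarrow>
     X \<subseteq> borel_measurable M0 \<and>
     (\<lambda>x. 0) \<in> X \<and>
     (\<forall>f\<in>X. \<forall>g\<in>X. (\<lambda>x. f x + g x) \<in> X) \<and>
     (\<forall>f\<in>X. \<forall>c. (\<lambda>x. c * f x) \<in> X) \<and>
     (\<forall>f\<in>X. 0 \<le> N f) \<and>
     (\<forall>f\<in>X. N f = 0 \<longleftrightarrow> (AE x in M0. f x = 0)) \<and>
     (\<forall>f\<in>X. \<forall>c. N (\<lambda>x. c * f x) = \<bar>c\<bar> * N f) \<and>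
     (\<forall>f\<in>X. \<forall>g\<in>X. N (\<lambda>x. f x + g x) \<le> N f + N g) \<and>
     (\<forall>u. (\<forall>n. u n \<in> X) \<and>
          (\<forall>e>0. \<exists>K. \<forall>m\<ge>K. \<forall>n\<ge>K. N (\<lambda>x. u m x - u n x) < e) \<longrightarrow>
          (\<exists>f\<in>X. (\<lambda>n. N (\<lambda>x. u n x - f x)) \<longlonglongrightarrow> 0)) \<and>
     (\<forall>f g. f \<in> borel_measurable M0 \<and> g \<in> X \<and> (AE x in M0. \<bar>f x\<bar> \<le> g x) \<longrightarrow>
          f \<in> X \<and> N f \<le> N g) \<and>
     (\<forall>fs f. (\<forall>n. fs n \<in> X) \<and> f \<in> borel_measurable M0 \<and>
          (AE x in M0. (\<forall>n. 0 \<le> fs n x \<and> fs n x \<le> fs (Suc n) x) \<and>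
                       (\<lambda>n. fs n x) \<longlonglongrightarrow> f x) \<and>
          bounded (range (\<lambda>n. N (fs n))) \<longrightarrow>
          f \<in> X \<and> N f = (SUP n. N (fs n)))"

definition equimeasurable :: "(real \<Rightarrow> real) \<Rightarrow> (real \<Rightarrow> real) \<Rightarrow> bool" where
  "equimeasurable f g \<longleftrightarrow>
     (\<forall>s. emeasure M0 {x \<in> space M0. s < \<bar>f x\<bar>} = emeasure M0 {x \<in> space M0. s < \<bar>g x\<bar>})"

definition ri_bfs :: "(real \<Rightarrow> real) set \<Rightarrow> ((real \<Rightarrow> real) \<Rightarrow> real) \<Rightarrow> bool" where
  "ri_bfs X N \<longleftrightarrow> bfs X N \<and>
     (\<forall>f g. f \<in> X \<and> g \<in> borel_measurable M0 \<and> equimeasurable f g \<longrightarrow> g \<in> X \<and> N g = N f)"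

definition Linf :: "(real \<Rightarrow> real) set" where
  "Linf = {f \<in> borel_measurable M0. \<exists>C. AE x in M0. \<bar>f x\<bar> \<le> C}"

definition L1 :: "(real \<Rightarrow> real) set" where
  "L1 = {f. integrable M0 f}"

definition CL :: "(real \<Rightarrow> real) set \<Rightarrow> (real \<Rightarrow> real) set \<Rightarrow> (real \<Rightarrow> real) set" where
  "CL Y Z = {f \<in> borel_measurable M0. \<exists>g\<in>Y. \<exists>h\<in>Z.
      AE x in M0. 0 \<le> g x \<and> 0 \<le> h x \<and> \<bar>f x\<bar> \<le> sqrt (g x) * sqrt (h x)}"

text \<open>f = f^*: nonnegative, nonincreasing, right-continuous on (0,infinity).\<close>
definition is_decr :: "(real \<Rightarrow> real) \<Rightarrow> bool" where
  "is_decr f \<longleftrightarrow> (\<forall>x>0. 0 \<le> f x) \<and> (\<forall>x y. 0 < x \<longrightarrow> x \<le> y \<longrightarrow> f y \<le> f x) \<and>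
     (\<forall>x>0. continuous (at_right x) f)"

text \<open>f = sum_{k>=1} c_k chi_[k-1,k) on (0,infinity).\<close>
definition step_form :: "(real \<Rightarrow> real) \<Rightarrow> bool" where
  "step_form f \<longleftrightarrow> (\<exists>c :: nat \<Rightarrow> real. \<forall>x>0. f x = c (nat \<lfloor>x\<rfloor> + 1))"

end

theory Submission
  imports Defs
begin

text \<open>If \<open>f \<le> \<surd>(g h)\<close> with \<open>g \<in> Y\<close>, \<open>h \<in> Z\<close>, the dilated decreasing rearrangements
  \<open>G\<^sub>0(t) = g\<^sup>*(t/2)\<close> and \<open>H\<^sub>0(t) = h\<^sup>*(t/2)\<close> still satisfy \<open>f \<le> \<surd>(G\<^sub>0 H\<^sub>0)\<close>, because \<open>f = f\<^sup>*\<close>,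
  and they stay in \<open>Y\<close> and \<open>Z\<close>, because dilation is bounded on rearrangement invariant spaces.
  The truncation \<open>u = min H\<^sub>0 f\<close> lies in \<open>Z\<close>; in case (i) it is bounded by \<open>f(1/2)\<close>, and in
  case (ii) it is integrable, since a decreasing function in a rearrangement invariant space is
  integrable near \<open>0\<close>. Either way the hypothesis puts \<open>u\<close> into \<open>Y\<close>, and then \<open>G = G\<^sub>0 + u \<in> Y\<close>
  and \<open>H = min H\<^sub>0 G \<in> Z\<close> satisfy \<open>H \<le> G\<close> and \<open>f\<^sup>2 \<le> G H\<close>. In case (i), composing \<open>G\<close> and \<open>H\<close>
  with the rounding \<open>x \<mapsto> max (1/2) \<lfloor>x\<rfloor>\<close> yields step functions that are still majorants,
  because \<open>f\<close> is constant on the unit intervals.\<close>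

section \<open>Lebesgue measure on \<open>(0, \<infinity>)\<close> and antitone functions\<close>

lemma space_M0 [simp]: "space M0 = {0<..}"
  by (simp add: M0_def)

lemma sets_M0_borel: "A \<in> sets borel \<Longrightarrow> A \<subseteq> {0<..} \<Longrightarrow> A \<in> sets M0"
  by (simp add: M0_def sets_restrict_space_iff)

lemma sets_M0_Ioc: "0 \<le> a \<Longrightarrow> {a<..b} \<in> sets M0"
  by (rule sets_M0_borel) auto

lemma emeasure_M0: "A \<in> sets borel \<Longrightarrow> A \<subseteq> {0<..} \<Longrightarrow> emeasure M0 A = emeasure lborel A"
  by (simp add: M0_def emeasure_restrict_space)

lemma emeasure_M0_Ioo: "0 \<le> a \<Longrightarrow> a \<le> b \<Longrightarrow> emeasure M0 {a<..<b} = ennreal (b - a)"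
  by (subst emeasure_M0) auto

lemma emeasure_M0_Ioc: "0 \<le> a \<Longrightarrow> a \<le> b \<Longrightarrow> emeasure M0 {a<..b} = ennreal (b - a)"
  by (subst emeasure_M0) auto

lemma emeasure_M0_space: "emeasure M0 {0<..} = \<infinity>"
proof -
  have "(SUP n. emeasure M0 {0<..real n}) = top"
    by (rule ennreal_SUP_eq_top) (auto simp: emeasure_M0_Ioc ennreal_of_nat_eq_real_of_nat)
  moreover have "(SUP n. emeasure M0 {0<..real n}) \<le> emeasure M0 {0<..}"
    by (intro SUP_least emeasure_mono) (auto intro: sets_M0_borel)
  ultimately show ?thesis
    by (metis top_unique infinity_ennreal_def)
qed

lemma borel_measurable_M0_antitone:
  fixes \<phi> :: "real \<Rightarrow> real"
  assumes "\<And>x y. 0 < x \<Longrightarrow> x \<le> y \<Longrightarrow> \<phi> y \<le> \<phi> x"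
  shows "\<phi> \<in> borel_measurable M0"
proof -
  have "sets (restrict_space borel {0<..}) \<subseteq> sets M0"
    unfolding M0_def by (rule mono_restrict_space) auto
  moreover have "space (restrict_space borel {0<..}) = space M0"
    by (simp add: space_restrict_space)
  moreover have "mono_on {0<..} (\<lambda>x. - \<phi> x)"
    using assms by (auto simp: mono_on_def)
  then have "(\<lambda>x. - \<phi> x) \<in> borel_measurable (restrict_space borel {0<..})"
    by (rule borel_measurable_mono_on_fnc)
  ultimately have "(\<lambda>x. - \<phi> x) \<in> borel_measurable M0"
    by (rule borel_measurable_subalgebra)
  then show ?thesis
    by simp
qed

definition antitone_nonneg :: "(real \<Rightarrow> real) \<Rightarrow> bool" where
  "antitone_nonneg \<phi> \<longleftrightarrow> (\<forall>x y. 0 < x \<longrightarrow> x \<le> y \<longrightarrow> \<phi> y \<le> \<phi> x) \<and> (\<forall>x>0. 0 \<le> \<phi> x)"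

lemma antitone_nonneg_measurable: "antitone_nonneg \<phi> \<Longrightarrow> \<phi> \<in> borel_measurable M0"
  unfolding antitone_nonneg_def by (rule borel_measurable_M0_antitone) blast

lemma antitone_nonneg_dilate: "antitone_nonneg \<phi> \<Longrightarrow> antitone_nonneg (\<lambda>x. \<phi> (x / 2))"
  unfolding antitone_nonneg_def by (metis divide_right_mono half_gt_zero zero_le_numeral)

lemma is_decr_antitone_nonneg: "is_decr f \<Longrightarrow> antitone_nonneg f"
  by (auto simp: is_decr_def antitone_nonneg_def)

lemma antitone_continuous_at_rightI:
  fixes \<phi> :: "real \<Rightarrow> real"
  assumes anti: "\<And>x y. 0 < x \<Longrightarrow> x \<le> y \<Longrightarrow> \<phi> y \<le> \<phi> x" and t: "0 < t"
    and jump: "\<And>e. 0 < e \<Longrightarrow> \<exists>d>0. \<phi> t - e < \<phi> (t + d)"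
  shows "continuous (at_right t) \<phi>"
  unfolding continuous_within
proof (rule order_tendstoI)
  fix a assume "a < \<phi> t"
  then obtain d where d: "d > 0" "a < \<phi> (t + d)"
    using jump[of "\<phi> t - a"] by auto
  have "a < \<phi> y" if "t < y" "y < t + d" for y
    using anti[of y "t + d"] that d t by linarith
  then show "\<forall>\<^sub>F y in at_right t. a < \<phi> y"
    unfolding eventually_at_right_field using d(1) by (intro exI[of _ "t + d"]) simp
next
  fix a assume "\<phi> t < a"
  then have "\<phi> y < a" if "t < y" for y
    using anti[of t y] that t by linarith
  then show "\<forall>\<^sub>F y in at_right t. \<phi> y < a"
    unfolding eventually_at_right_field by (intro exI[of _ "t + 1"]) simp
qed

lemma is_decr_dilate:
  fixes \<phi> :: "real \<Rightarrow> real"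
  assumes "is_decr \<phi>"
  shows "is_decr (\<lambda>x. \<phi> (x / 2))"
  unfolding is_decr_def
proof (intro conjI allI impI)
  fix t :: real assume "0 < t"
  have "(\<lambda>x. x / 2) ` {t<..} = {t / 2<..}"
  proof
    show "{t / 2<..} \<subseteq> (\<lambda>x. x / 2) ` {t<..}"
    proof
      fix y assume "y \<in> {t / 2<..}"
      then show "y \<in> (\<lambda>x. x / 2) ` {t<..}"
        by (intro image_eqI[of _ _ "2 * y"]) auto
    qed
  qed auto
  then have "continuous (at (t / 2) within (\<lambda>x. x / 2) ` {t<..}) \<phi>"
    using assms \<open>0 < t\<close> by (simp add: is_decr_def)
  moreover have "continuous (at_right t) (\<lambda>x. x / 2 :: real)"
    by (intro continuous_intros) simp
  ultimately show "continuous (at_right t) (\<lambda>x. \<phi> (x / 2))"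
    using continuous_within_compose2 by blast
next
  fix x y :: real assume "0 < x" "x \<le> y"
  then show "\<phi> (y / 2) \<le> \<phi> (x / 2)"
    using assms by (simp add: is_decr_def)
next
  fix x :: real assume "0 < x"
  then show "0 \<le> \<phi> (x / 2)"
    using assms by (simp add: is_decr_def)
qed

lemma eventually_div_Suc_less:
  assumes "0 < x"
  shows "\<forall>\<^sub>F n in sequentially. c / real (Suc n) < x"
proof -
  have "(\<lambda>n. c * inverse (real (Suc n))) \<longlonglongrightarrow> 0"
    by (rule tendsto_mult_right_zero[OF LIMSEQ_inverse_real_of_nat])
  then show ?thesis
    using assms by (simp add: divide_inverse order_tendstoD(2))
qed

section \<open>Distribution function and decreasing rearrangement\<close>

definition distribution_fun :: "(real \<Rightarrow> real) \<Rightarrow> real \<Rightarrow> ennreal" where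
  "distribution_fun u s = emeasure M0 {x \<in> space M0. s < \<bar>u x\<bar>}"

lemma equimeasurable_iff_distribution_fun:
  "equimeasurable f g \<longleftrightarrow> distribution_fun f = distribution_fun g"
  by (simp add: equimeasurable_def distribution_fun_def fun_eq_iff)

lemma sets_M0_level:
  fixes u :: "real \<Rightarrow> real"
  assumes "u \<in> borel_measurable M0"
  shows "{x \<in> space M0. s < \<bar>u x\<bar>} \<in> sets M0" "{x. 0 < x \<and> s < \<bar>u x\<bar>} \<in> sets M0"
proof -
  show "{x \<in> space M0. s < \<bar>u x\<bar>} \<in> sets M0"
    using assms by measurable
  then show "{x. 0 < x \<and> s < \<bar>u x\<bar>} \<in> sets M0"
    by simp
qed

lemma distribution_fun_antimono:
  "u \<in> borel_measurable M0 \<Longrightarrow> s \<le> s' \<Longrightarrow> distribution_fun u s' \<le> distribution_fun u s"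
  unfolding distribution_fun_def by (rule emeasure_mono) (auto intro: sets_M0_level)

lemma distribution_fun_neg: "s < 0 \<Longrightarrow> distribution_fun u s = \<infinity>"
proof -
  assume "s < 0"
  then have "{x \<in> space M0. s < \<bar>u x\<bar>} = {0<..}"
    by auto
  then show ?thesis
    by (simp add: distribution_fun_def emeasure_M0_space)
qed

lemma distribution_fun_continuous_from_right:
  assumes u: "u \<in> borel_measurable M0"
  shows "(SUP n. distribution_fun u (s + 1 / Suc n)) = distribution_fun u s"
proof -
  let ?A = "\<lambda>n::nat. {x \<in> space M0. s + 1 / Suc n < \<bar>u x\<bar>}"
  have "incseq ?A"
  proof (rule incseq_SucI)
    fix n :: nat
    have "1 / real (Suc (Suc n)) \<le> 1 / Suc n"
      by (simp add: frac_le)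
    then show "?A n \<subseteq> ?A (Suc n)"
      by auto
  qed
  with u have "(SUP n. emeasure M0 (?A n)) = emeasure M0 (\<Union>n. ?A n)"
    by (intro SUP_emeasure_incseq) (auto intro: sets_M0_level)
  moreover have "(\<Union>n. ?A n) = {x \<in> space M0. s < \<bar>u x\<bar>}"
  proof safe
    fix x assume x: "x \<in> space M0" "s < \<bar>u x\<bar>"
    then obtain n where "inverse (real (Suc n)) < \<bar>u x\<bar> - s"
      using reals_Archimedean[of "\<bar>u x\<bar> - s"] by auto
    then have "x \<in> ?A n"
      using x by (auto simp: field_simps)
    then show "x \<in> (\<Union>n. ?A n)"
      by blast
  next
    fix x n assume "s + 1 / real (Suc n) < \<bar>u x\<bar>"
    moreover have "0 < 1 / real (Suc n)"
      by simp
    ultimately show "s < \<bar>u x\<bar>"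
      by linarith
  qed
  ultimately show ?thesis
    by (simp add: distribution_fun_def)
qed

lemma ennreal_le_distribution_fun:
  assumes \<phi>: "antitone_nonneg \<phi>" and y: "0 < y" "s < \<phi> y"
  shows "ennreal y \<le> distribution_fun \<phi> s"
proof -
  have "{0<..y} \<subseteq> {x \<in> space M0. s < \<bar>\<phi> x\<bar>}"
    using \<phi> y by (force simp: antitone_nonneg_def)
  then have "emeasure M0 {0<..y} \<le> distribution_fun \<phi> s"
    unfolding distribution_fun_def
    by (rule emeasure_mono) (rule sets_M0_level[OF antitone_nonneg_measurable[OF \<phi>]])
  then show ?thesis
    using y by (simp add: emeasure_M0_Ioc)
qed

text \<open>The decreasing rearrangement \<open>u\<^sup>*\<close>. Unless \<open>distribution_vanishes u\<close>, the set below may be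
  empty for small \<open>t\<close> and the infimum is then a junk value.\<close>

definition rearrangement :: "(real \<Rightarrow> real) \<Rightarrow> real \<Rightarrow> real" where
  "rearrangement u t = Inf {s. 0 \<le> s \<and> distribution_fun u s \<le> ennreal t}"

definition distribution_vanishes :: "(real \<Rightarrow> real) \<Rightarrow> bool" where
  "distribution_vanishes u \<longleftrightarrow> (\<forall>t>0. \<exists>s\<ge>0. distribution_fun u s \<le> ennreal t)"

lemma bdd_below_nonneg: "bdd_below {s :: real. 0 \<le> s \<and> P s}"
  by (rule bdd_belowI[of _ 0]) simp

lemma rearrangement_nonneg:
  "distribution_vanishes u \<Longrightarrow> 0 < t \<Longrightarrow> 0 \<le> rearrangement u t"
  unfolding rearrangement_def distribution_vanishes_def by (intro cInf_greatest) auto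

lemma rearrangement_le:
  "0 \<le> s \<Longrightarrow> distribution_fun u s \<le> ennreal t \<Longrightarrow> rearrangement u t \<le> s"
  unfolding rearrangement_def by (rule cInf_lower) (simp_all add: bdd_below_nonneg)

lemma distribution_fun_rearrangement_le:
  assumes u: "u \<in> borel_measurable M0" and v: "distribution_vanishes u" and t: "0 < t"
  shows "distribution_fun u (rearrangement u t) \<le> ennreal t"
proof (rule ccontr)
  let ?r = "rearrangement u t" and ?S = "{s. 0 \<le> s \<and> distribution_fun u s \<le> ennreal t}"
  assume "\<not> distribution_fun u ?r \<le> ennreal t"
  then have "ennreal t < (SUP n. distribution_fun u (?r + 1 / Suc n))"
    by (metis distribution_fun_continuous_from_right[OF u] not_le)
  then obtain n where n: "ennreal t < distribution_fun u (?r + 1 / Suc n)"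
    by (auto simp: less_SUP_iff)
  have "?S \<noteq> {}"
    using v t by (auto simp: distribution_vanishes_def)
  moreover have "Inf ?S < ?r + 1 / Suc n"
    by (simp add: rearrangement_def)
  ultimately obtain s where s: "s \<in> ?S" "s < ?r + 1 / Suc n"
    by (metis cInf_lessD)
  then have "distribution_fun u (?r + 1 / Suc n) \<le> distribution_fun u s"
    by (intro distribution_fun_antimono[OF u]) simp
  also have "\<dots> \<le> ennreal t"
    using s by simp
  finally show False
    using n by simp
qed

lemma less_rearrangement_iff:
  assumes u: "u \<in> borel_measurable M0" and v: "distribution_vanishes u" and t: "0 < t"
    and s: "0 \<le> s"
  shows "s < rearrangement u t \<longleftrightarrow> ennreal t < distribution_fun u s"
proof
  assume "s < rearrangement u t"
  then show "ennreal t < distribution_fun u s"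
    using rearrangement_le[OF s, of u t] by (meson not_le)
next
  assume less: "ennreal t < distribution_fun u s"
  show "s < rearrangement u t"
  proof (rule ccontr)
    assume "\<not> s < rearrangement u t"
    then have "distribution_fun u s \<le> distribution_fun u (rearrangement u t)"
      by (intro distribution_fun_antimono[OF u]) simp
    also have "\<dots> \<le> ennreal t"
      by (rule distribution_fun_rearrangement_le[OF u v t])
    finally show False
      using less by simp
  qed
qed

lemma antitone_nonneg_rearrangement:
  assumes v: "distribution_vanishes u"
  shows "antitone_nonneg (rearrangement u)"
  unfolding antitone_nonneg_def
proof (intro conjI allI impI)
  fix x y :: real assume "0 < x" "x \<le> y"
  then show "rearrangement u y \<le> rearrangement u x"
    unfolding rearrangement_def using v
    by (intro cInf_superset_mono)
      (auto simp: distribution_vanishes_def bdd_below_nonneg intro: order_trans ennreal_leI)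
qed (use v rearrangement_nonneg in blast)

lemma distribution_fun_rearrangement:
  assumes u: "u \<in> borel_measurable M0" and v: "distribution_vanishes u"
  shows "distribution_fun (rearrangement u) = distribution_fun u"
proof
  fix s
  show "distribution_fun (rearrangement u) s = distribution_fun u s"
  proof (cases "s < 0")
    case True
    then show ?thesis
      by (simp add: distribution_fun_neg)
  next
    case False
    have "{x \<in> space M0. s < \<bar>rearrangement u x\<bar>} = {x \<in> {0<..}. ennreal x < distribution_fun u s}"
      using less_rearrangement_iff[OF u v] rearrangement_nonneg[OF v] False by auto
    also have "emeasure M0 \<dots> = distribution_fun u s"
    proof (cases "distribution_fun u s" rule: ennreal_cases)
      case (real r)
      then have "{x \<in> {0<..}. ennreal x < distribution_fun u s} = {0<..<r}"
        by (auto simp: ennreal_less_iff)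
      then show ?thesis
        using real by (simp add: emeasure_M0_Ioo)
    next
      case top
      then show ?thesis
        using emeasure_M0_space by (simp add: greaterThan_def)
    qed
    finally show ?thesis
      by (simp add: distribution_fun_def)
  qed
qed

lemma continuous_at_right_rearrangement:
  assumes u: "u \<in> borel_measurable M0" and v: "distribution_vanishes u" and t: "0 < t"
  shows "continuous (at_right t) (rearrangement u)"
proof (rule antitone_continuous_at_rightI[OF _ t])
  show "rearrangement u y \<le> rearrangement u x" if "0 < x" "x \<le> y" for x y
    using antitone_nonneg_rearrangement[OF v] that by (simp add: antitone_nonneg_def)
next
  fix e :: real assume e: "0 < e"
  let ?s = "rearrangement u t - e"
  show "\<exists>d>0. ?s < rearrangement u (t + d)"
  proof (cases "?s < 0")
    case True
    then show ?thesis
      using rearrangement_nonneg[OF v, of "t + 1"] t by (intro exI[of _ 1]) auto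
  next
    case False
    have "?s < rearrangement u t"
      using e by simp
    then have less: "ennreal t < distribution_fun u ?s"
      using less_rearrangement_iff[OF u v t] False by simp
    show ?thesis
    proof (cases "distribution_fun u ?s" rule: ennreal_cases)
      case (real r)
      with less t have "t < r"
        by (auto simp: ennreal_less_iff)
      define d where "d = (r - t) / 2"
      have d: "0 < d" "t + d < r"
        using \<open>t < r\<close> by (simp_all add: d_def field_simps)
      then have "ennreal (t + d) < distribution_fun u ?s"
        unfolding real using t by (intro ennreal_lessI) auto
      then show ?thesis
        using less_rearrangement_iff[OF u v, of "t + d" ?s] False t d by (intro exI[of _ d]) auto
    next
      case top
      then show ?thesis
        using less_rearrangement_iff[OF u v, of "t + 1" ?s] False t by (intro exI[of _ 1]) auto
    qed
  qed
qed

lemma is_decr_rearrangement: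
  assumes "u \<in> borel_measurable M0" and "distribution_vanishes u"
  shows "is_decr (rearrangement u)"
  using antitone_nonneg_rearrangement[OF assms(2)] continuous_at_right_rearrangement[OF assms]
  by (auto simp: is_decr_def antitone_nonneg_def)

lemma distribution_fun_le_sqrt_mult:
  assumes gm: "g \<in> borel_measurable M0" and hm: "h \<in> borel_measurable M0"
    and ae: "AE x in M0. 0 \<le> g x \<and> 0 \<le> h x \<and> \<bar>f x\<bar> \<le> sqrt (g x) * sqrt (h x)"
    and a: "0 \<le> a" and b: "0 \<le> b"
  shows "distribution_fun f (sqrt a * sqrt b) \<le> distribution_fun g a + distribution_fun h b"
proof -
  let ?G = "{x \<in> space M0. a < \<bar>g x\<bar>}" and ?H = "{x \<in> space M0. b < \<bar>h x\<bar>}"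
  have "AE x in M0. x \<in> {x \<in> space M0. sqrt a * sqrt b < \<bar>f x\<bar>} \<longrightarrow> x \<in> ?G \<union> ?H"
    using ae
  proof eventually_elim
    case (elim x)
    show ?case
    proof (rule impI, rule ccontr)
      assume x: "x \<in> {x \<in> space M0. sqrt a * sqrt b < \<bar>f x\<bar>}" and "x \<notin> ?G \<union> ?H"
      then have "g x \<le> a" "h x \<le> b"
        using elim by auto
      then have "sqrt (g x) * sqrt (h x) \<le> sqrt a * sqrt b"
        using elim by (intro mult_mono) auto
      then show False
        using x elim by simp
    qed
  qed
  then have "distribution_fun f (sqrt a * sqrt b) \<le> emeasure M0 (?G \<union> ?H)"
    unfolding distribution_fun_def by (rule emeasure_mono_AE) (intro sets.Un sets_M0_level gm hm)
  also have "\<dots> \<le> emeasure M0 ?G + emeasure M0 ?H"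
    by (rule emeasure_subadditive) (intro sets_M0_level gm hm)+
  finally show ?thesis
    by (simp only: distribution_fun_def)
qed

text \<open>This is the inequality \<open>(g h)\<^sup>*(t) \<le> g\<^sup>*(t/2) h\<^sup>*(t/2)\<close>; right continuity of \<open>f\<close> is what
  makes the level set of \<open>f\<close> strictly longer than \<open>t\<close> if it failed.\<close>

lemma is_decr_le_sqrt_rearrangements:
  assumes f: "is_decr f" and gm: "g \<in> borel_measurable M0" and hm: "h \<in> borel_measurable M0"
    and gv: "distribution_vanishes g" and hv: "distribution_vanishes h"
    and ae: "AE x in M0. 0 \<le> g x \<and> 0 \<le> h x \<and> \<bar>f x\<bar> \<le> sqrt (g x) * sqrt (h x)"
    and t: "0 < t"
  shows "f t \<le> sqrt (rearrangement g (t / 2)) * sqrt (rearrangement h (t / 2))"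
proof (rule ccontr)
  define a where "a = rearrangement g (t / 2)"
  define b where "b = rearrangement h (t / 2)"
  have ab: "0 \<le> a" "0 \<le> b"
    using t by (auto simp: a_def b_def intro: rearrangement_nonneg gv hv)
  assume "\<not> f t \<le> sqrt (rearrangement g (t / 2)) * sqrt (rearrangement h (t / 2))"
  then have "sqrt a * sqrt b < f t"
    by (simp add: a_def b_def)
  moreover have "(f \<longlongrightarrow> f t) (at_right t)"
    using f t by (simp add: is_decr_def continuous_within)
  ultimately have "\<forall>\<^sub>F y in at_right t. sqrt a * sqrt b < f y"
    by (rule order_tendstoD(1)[rotated])
  then obtain r where r: "t < r" "\<And>y. t < y \<Longrightarrow> y < r \<Longrightarrow> sqrt a * sqrt b < f y"
    unfolding eventually_at_right_field by blast
  have "{0<..<r} \<subseteq> {x \<in> space M0. sqrt a * sqrt b < \<bar>f x\<bar>}"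
  proof
    fix y assume y: "y \<in> {0<..<r}"
    have "sqrt a * sqrt b < f y"
    proof (cases "y \<le> t")
      case True
      then have "f t \<le> f y"
        using f y by (simp add: is_decr_def)
      then show ?thesis
        using \<open>sqrt a * sqrt b < f t\<close> by simp
    qed (use r y in auto)
    then show "y \<in> {x \<in> space M0. sqrt a * sqrt b < \<bar>f x\<bar>}"
      using y by simp
  qed
  then have "emeasure M0 {0<..<r} \<le> distribution_fun f (sqrt a * sqrt b)"
    unfolding distribution_fun_def
    by (rule emeasure_mono) (intro sets_M0_level antitone_nonneg_measurable is_decr_antitone_nonneg f)
  then have "ennreal r \<le> distribution_fun f (sqrt a * sqrt b)"
    using t r(1) by (simp add: emeasure_M0_Ioo)
  also have "\<dots> \<le> distribution_fun g a + distribution_fun h b"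
    using gm hm ae ab by (rule distribution_fun_le_sqrt_mult)
  also have "\<dots> \<le> ennreal (t / 2) + ennreal (t / 2)"
    using t by (intro add_mono) (auto simp: a_def b_def intro: distribution_fun_rearrangement_le gm hm gv hv)
  also have "\<dots> = ennreal t"
    using t by (simp flip: ennreal_plus)
  finally show False
    using t r(1) by (simp add: ennreal_le_iff2)
qed

section \<open>Rearrangement invariant spaces\<close>

lemma not_AE_M0_indicator_Ioc_zero:
  assumes "0 < t"
  shows "\<not> (AE x in M0. indicator {0<..t} x = (0 :: real))"
proof
  assume "AE x in M0. indicator {0<..t} x = (0 :: real)"
  then have "AE x in M0. x \<notin> {0<..t}"
    by eventually_elim (auto split: split_indicator)
  moreover have "{0<..t} \<in> sets M0"
    by (rule sets_M0_Ioc) simp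
  ultimately have "{0<..t} \<in> null_sets M0"
    using AE_iff_null_sets by blast
  then have "emeasure M0 {0<..t} = 0"
    by (rule null_setsD1)
  moreover have "emeasure M0 {0<..t} = ennreal t"
    using assms emeasure_M0_Ioc[of 0 t] by simp
  ultimately show False
    using assms by simp
qed

locale ri_space =
  fixes X :: "(real \<Rightarrow> real) set" and N :: "(real \<Rightarrow> real) \<Rightarrow> real"
  assumes ri_bfs: "ri_bfs X N"
begin

lemma bfs: "bfs X N"
  using ri_bfs by (simp add: ri_bfs_def)

lemma
  shows mem_measurable: "f \<in> X \<Longrightarrow> f \<in> borel_measurable M0"
    and zero_mem: "(\<lambda>x. 0) \<in> X"
    and add_mem: "f \<in> X \<Longrightarrow> g \<in> X \<Longrightarrow> (\<lambda>x. f x + g x) \<in> X"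
    and scale_mem: "f \<in> X \<Longrightarrow> (\<lambda>x. c * f x) \<in> X"
    and N_nonneg: "f \<in> X \<Longrightarrow> 0 \<le> N f"
    and N_eq_0_iff: "f \<in> X \<Longrightarrow> N f = 0 \<longleftrightarrow> (AE x in M0. f x = 0)"
    and N_scale: "f \<in> X \<Longrightarrow> N (\<lambda>x. c * f x) = \<bar>c\<bar> * N f"
    and N_triangle: "f \<in> X \<Longrightarrow> g \<in> X \<Longrightarrow> N (\<lambda>x. f x + g x) \<le> N f + N g"
    and dominated_mem: "f \<in> borel_measurable M0 \<Longrightarrow> g \<in> X \<Longrightarrow> (AE x in M0. \<bar>f x\<bar> \<le> g x) \<Longrightarrow>
      f \<in> X \<and> N f \<le> N g"
    and fatou: "(\<forall>n. fs n \<in> X) \<Longrightarrow> f \<in> borel_measurable M0 \<Longrightarrow>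
      (AE x in M0. (\<forall>n. 0 \<le> fs n x \<and> fs n x \<le> fs (Suc n) x) \<and> (\<lambda>n. fs n x) \<longlonglongrightarrow> f x) \<Longrightarrow>
      bounded (range (\<lambda>n. N (fs n))) \<Longrightarrow> f \<in> X \<and> N f = (SUP n. N (fs n))"
  using bfs unfolding bfs_def by blast+

lemma equimeasurable_mem:
  "f \<in> X \<Longrightarrow> g \<in> borel_measurable M0 \<Longrightarrow> equimeasurable f g \<Longrightarrow> g \<in> X \<and> N g = N f"
  using ri_bfs unfolding ri_bfs_def by blast

lemma dominated_mem_pointwise:
  assumes "f \<in> borel_measurable M0" "g \<in> X" "\<And>x. 0 < x \<Longrightarrow> \<bar>f x\<bar> \<le> g x"
  shows "f \<in> X \<and> N f \<le> N g"
  using assms by (intro dominated_mem) (auto intro: AE_I2)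

lemma N_zero: "N (\<lambda>x. 0) = 0"
  using N_eq_0_iff[OF zero_mem] by simp

lemma abs_mem:
  assumes "u \<in> X"
  shows "(\<lambda>x. \<bar>u x\<bar>) \<in> X" "N (\<lambda>x. \<bar>u x\<bar>) = N u"
proof -
  have "(\<lambda>x. \<bar>u x\<bar>) \<in> borel_measurable M0"
    using mem_measurable[OF assms] by measurable
  then show "(\<lambda>x. \<bar>u x\<bar>) \<in> X" "N (\<lambda>x. \<bar>u x\<bar>) = N u"
    using equimeasurable_mem[OF assms] by (auto simp: equimeasurable_def)
qed

lemma sum_mem:
  fixes n :: nat
  assumes "\<And>i. i < n \<Longrightarrow> F i \<in> X"
  shows "(\<lambda>x. \<Sum>i<n. F i x) \<in> X \<and> N (\<lambda>x. \<Sum>i<n. F i x) \<le> (\<Sum>i<n. N (F i))"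
  using assms
proof (induction n)
  case 0
  then show ?case
    using zero_mem N_zero by simp
next
  case (Suc n)
  then have IH: "(\<lambda>x. \<Sum>i<n. F i x) \<in> X" "N (\<lambda>x. \<Sum>i<n. F i x) \<le> (\<Sum>i<n. N (F i))"
    by auto
  moreover have "F n \<in> X"
    using Suc.prems by simp
  ultimately show ?case
    using add_mem[of "\<lambda>x. \<Sum>i<n. F i x" "F n"] N_triangle[of "\<lambda>x. \<Sum>i<n. F i x" "F n"] by simp
qed

lemma rearrangement_mem:
  assumes "u \<in> X" "distribution_vanishes u"
  shows "rearrangement u \<in> X \<and> N (rearrangement u) = N u"
  using assms antitone_nonneg_measurable[OF antitone_nonneg_rearrangement]
    distribution_fun_rearrangement[OF mem_measurable]
  by (intro equimeasurable_mem) (auto simp: equimeasurable_iff_distribution_fun)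

text \<open>The rearrangement of the truncation \<open>min \<bar>u\<bar> n\<close> is at least \<open>n\<close> on \<open>(0, t]\<close>.\<close>

lemma scaled_indicator_mem:
  assumes u: "u \<in> X" and t: "0 < t" and big: "\<And>s. 0 \<le> s \<Longrightarrow> ennreal t < distribution_fun u s"
  shows "(\<lambda>x. real n * indicator {0<..t} x) \<in> X \<and> N (\<lambda>x. real n * indicator {0<..t} x) \<le> N u"
proof -
  have um: "u \<in> borel_measurable M0"
    using u by (rule mem_measurable)
  define v where "v x = min \<bar>u x\<bar> (real n)" for x
  have vm: "v \<in> borel_measurable M0"
    unfolding v_def using um by measurable
  have v: "v \<in> X" "N v \<le> N u"
    using dominated_mem_pointwise[OF vm abs_mem(1)[OF u]] abs_mem(2)[OF u] by (simp_all add: v_def)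
  have "{x \<in> space M0. real n < \<bar>v x\<bar>} = {}"
    by (auto simp: v_def)
  then have "distribution_fun v (real n) = 0"
    unfolding distribution_fun_def by (simp only: emeasure_empty)
  then have vv: "distribution_vanishes v"
    unfolding distribution_vanishes_def by (auto intro!: exI[of _ "real n"])
  have "real n \<le> rearrangement v x" if x: "0 < x" "x \<le> t" for x
  proof (rule ccontr)
    let ?s = "rearrangement v x"
    assume "\<not> real n \<le> ?s"
    then have "{x \<in> space M0. ?s < \<bar>v x\<bar>} = {x \<in> space M0. ?s < \<bar>u x\<bar>}"
      by (auto simp: v_def)
    moreover have "0 \<le> ?s"
      using vv x(1) by (rule rearrangement_nonneg)
    then have "ennreal x < distribution_fun u ?s"
      using big x by (meson ennreal_leI le_less_trans)
    ultimately have "ennreal x < distribution_fun v ?s"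
      by (simp add: distribution_fun_def)
    then show False
      using less_rearrangement_iff[OF vm vv x(1) \<open>0 \<le> ?s\<close>] by simp
  qed
  moreover have "(\<lambda>x. real n * indicator {0<..t} x :: real) \<in> borel_measurable M0"
    using sets_M0_Ioc[of 0 t] by (intro borel_measurable_times borel_measurable_indicator) simp_all
  ultimately have "(\<lambda>x. real n * indicator {0<..t} x) \<in> X \<and>
      N (\<lambda>x. real n * indicator {0<..t} x) \<le> N (rearrangement v)"
    using rearrangement_mem[OF v(1) vv] rearrangement_nonneg[OF vv]
    by (intro dominated_mem_pointwise) (auto split: split_indicator)
  then show ?thesis
    using rearrangement_mem[OF v(1) vv] v(2) by simp
qed

lemma distribution_vanishes_mem:
  assumes u: "u \<in> X"
  shows "distribution_vanishes u"
proof (rule ccontr)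
  assume "\<not> distribution_vanishes u"
  then obtain t where t: "0 < t" and big: "\<And>s. 0 \<le> s \<Longrightarrow> ennreal t < distribution_fun u s"
    unfolding distribution_vanishes_def by (meson not_le)
  let ?chi = "indicator {0<..t} :: real \<Rightarrow> real"
  have chi: "?chi \<in> X"
    using scaled_indicator_mem[OF u t big, of 1] by simp
  have le: "real n * N ?chi \<le> N u" for n :: nat
    using scaled_indicator_mem[OF u t big, of n] N_scale[OF chi, of "real n"] by simp
  have "N ?chi = 0"
  proof (rule ccontr)
    assume "N ?chi \<noteq> 0"
    then have pos: "0 < N ?chi"
      using N_nonneg[OF chi] by simp
    obtain n :: nat where "N u / N ?chi < real n"
      using reals_Archimedean2 by blast
    then show False
      using le[of n] pos by (simp add: field_simps)
  qed
  then show False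
    using N_eq_0_iff[OF chi] not_AE_M0_indicator_Ioc_zero[OF t] by simp
qed

lemma mem_if_distribution_le:
  assumes v: "v \<in> X" and u: "u \<in> borel_measurable M0"
    and le: "\<And>s. distribution_fun u s \<le> distribution_fun v s"
  shows "u \<in> X \<and> N u \<le> N v"
proof -
  have vv: "distribution_vanishes v"
    using v by (rule distribution_vanishes_mem)
  then have uv: "distribution_vanishes u"
    using le by (meson distribution_vanishes_def order_trans)
  have "rearrangement u x \<le> rearrangement v x" if "0 < x" for x
    unfolding rearrangement_def using vv that le
    by (intro cInf_superset_mono) (auto simp: distribution_vanishes_def bdd_below_nonneg intro: order_trans)
  then have "rearrangement u \<in> X \<and> N (rearrangement u) \<le> N (rearrangement v)"
    using rearrangement_mem[OF v vv] rearrangement_nonneg[OF uv]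
      antitone_nonneg_measurable[OF antitone_nonneg_rearrangement[OF uv]]
    by (intro dominated_mem_pointwise) auto
  moreover have "equimeasurable (rearrangement u) u"
    by (simp add: equimeasurable_iff_distribution_fun distribution_fun_rearrangement[OF u uv])
  ultimately have "u \<in> X \<and> N u = N (rearrangement u)"
    using equimeasurable_mem[OF _ u] by blast
  then show ?thesis
    using \<open>rearrangement u \<in> X \<and> _\<close> rearrangement_mem[OF v vv] by simp
qed

end

section \<open>Dilation\<close>

text \<open>For \<open>c = 1, 2\<close> these sets cover \<open>[e, \<infinity>)\<close>, and each fills at most half of every interval
  \<open>(0, x]\<close>; this splits the dilation \<open>\<phi>(x/2)\<close> of a decreasing \<open>\<phi>\<close> into two pieces dominated by \<open>\<phi>\<close>
  in distribution.\<close>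

definition alternating_intervals :: "real \<Rightarrow> real \<Rightarrow> real set" where
  "alternating_intervals e c = (\<Union>k::nat. {(2 * real k + c) * e ..< (2 * real k + c + 1) * e})"

lemma alternating_intervals_borel: "alternating_intervals e c \<in> sets borel"
  unfolding alternating_intervals_def by (intro sets.countable_UN) auto

lemma alternating_intervals_pos:
  assumes "0 < e" "1 \<le> c"
  shows "alternating_intervals e c \<subseteq> {0<..}"
proof
  fix x assume "x \<in> alternating_intervals e c"
  then obtain k :: nat where "(2 * real k + c) * e \<le> x"
    by (auto simp: alternating_intervals_def)
  moreover have "0 < (2 * real k + c) * e"
    using assms by simp
  ultimately show "x \<in> {0<..}"
    by simp
qed

lemma alternating_intervals_cover:
  assumes e: "0 < e" and x: "e \<le> x"
  shows "x \<in> alternating_intervals e 1 \<union> alternating_intervals e 2"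
proof -
  define j where "j = nat \<lfloor>x / e\<rfloor>"
  have "1 \<le> x / e"
    using e x by simp
  then have "1 \<le> j" "real j \<le> x / e" "x / e < real j + 1"
    by (simp_all add: j_def le_nat_floor of_nat_nat)
  then have j: "1 \<le> j" "real j * e \<le> x" "x < (real j + 1) * e"
    using e by (simp_all add: field_simps)
  define k where "k = (j - 1) div 2"
  define c where "c = (j - 1) mod 2 + 1"
  have "j = 2 * k + c"
    using j(1) unfolding k_def c_def by presburger
  then have "x \<in> {(2 * real k + real c) * e ..< (2 * real k + real c + 1) * e}"
    using j by simp
  then have "x \<in> alternating_intervals e (real c)"
    unfolding alternating_intervals_def by blast
  moreover have "c = 1 \<or> c = 2"
    by (cases "(j - 1) mod 2 = 0") (auto simp: c_def)
  ultimately show ?thesis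
    by auto
qed

lemma alternating_intervals_Ioc_subset:
  assumes e: "0 < e" and c: "1 \<le> c" and q: "x < 2 * (real q + 1) * e"
  shows "alternating_intervals e c \<inter> {0<..x} \<subseteq>
    (\<Union>k\<in>{..<q}. {(2 * real k + c) * e ..< (2 * real k + c + 1) * e}) \<union> {(2 * real q + c) * e .. x}"
proof
  fix t assume "t \<in> alternating_intervals e c \<inter> {0<..x}"
  then obtain k :: nat where k: "(2 * real k + c) * e \<le> t" "t < (2 * real k + c + 1) * e" "t \<le> x"
    by (auto simp: alternating_intervals_def)
  have "(2 * real k + c) * e < 2 * (real q + 1) * e"
    using k q by linarith
  then have "real k < real (q + 1)"
    using e c by (simp add: mult_less_cancel_right)
  then have "k \<le> q"
    by simp
  then show "t \<in> (\<Union>k\<in>{..<q}. {(2 * real k + c) * e ..< (2 * real k + c + 1) * e}) \<union>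
      {(2 * real q + c) * e .. x}"
    using k by (cases "k < q") (auto intro!: bexI[of _ k])
qed

lemma alternating_length_le_half:
  fixes q c e x :: real
  assumes e: "0 < e" and c: "1 \<le> c" and q: "2 * q * e \<le> x" "x < 2 * (q + 1) * e"
  shows "q * e + max 0 (x - (2 * q + c) * e) \<le> x / 2"
proof (cases "x \<le> (2 * q + c) * e")
  case True
  then show ?thesis
    using q by (simp add: max_def)
next
  case False
  have "e \<le> c * e"
    using c e by simp
  moreover have "(2 * q + c) * e = 2 * (q * e) + c * e" "2 * (q + 1) * e = 2 * (q * e) + 2 * e"
    by (simp_all add: algebra_simps)
  moreover have "max 0 (x - (2 * q + c) * e) = x - (2 * q + c) * e"
    using False by simp
  ultimately show ?thesis
    using q by linarith
qed

lemma emeasure_alternating_intervals_le: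
  assumes e: "0 < e" and c: "1 \<le> c" and x: "0 \<le> x"
  shows "emeasure lborel (alternating_intervals e c \<inter> {0<..x}) \<le> ennreal (x / 2)"
proof -
  define q where "q = nat \<lfloor>x / (2 * e)\<rfloor>"
  have "0 \<le> x / (2 * e)"
    using x e by simp
  then have "real q \<le> x / (2 * e)" "x / (2 * e) < real q + 1"
    unfolding q_def by (simp_all add: of_nat_nat)
  then have q: "2 * real q * e \<le> x" "x < 2 * (real q + 1) * e"
    using e by (simp_all add: field_simps)
  let ?I = "\<lambda>k::nat. {(2 * real k + c) * e ..< (2 * real k + c + 1) * e}"
  have "emeasure lborel (alternating_intervals e c \<inter> {0<..x})
      \<le> emeasure lborel ((\<Union>k\<in>{..<q}. ?I k) \<union> {(2 * real q + c) * e .. x})"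
    using alternating_intervals_Ioc_subset[OF e c q(2)] by (rule emeasure_mono) auto
  also have "\<dots> \<le> emeasure lborel (\<Union>k\<in>{..<q}. ?I k) + emeasure lborel {(2 * real q + c) * e .. x}"
    by (rule emeasure_subadditive) auto
  also have "emeasure lborel (\<Union>k\<in>{..<q}. ?I k) \<le> (\<Sum>k\<in>{..<q}. emeasure lborel (?I k))"
    by (rule emeasure_subadditive_finite) auto
  also have "(\<Sum>k\<in>{..<q}. emeasure lborel (?I k)) = ennreal (real q * e)"
    using e by (simp add: algebra_simps ennreal_of_nat_eq_real_of_nat ennreal_mult)
  also have "emeasure lborel {(2 * real q + c) * e .. x} = ennreal (max 0 (x - (2 * real q + c) * e))"
    by (simp add: emeasure_lborel_Icc_eq max_def)
  also have "ennreal (real q * e) + ennreal (max 0 (x - (2 * real q + c) * e)) =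
      ennreal (real q * e + max 0 (x - (2 * real q + c) * e))"
    using e by (simp add: ennreal_plus)
  also have "\<dots> \<le> ennreal (x / 2)"
    using alternating_length_le_half[OF e c q] by (rule ennreal_leI)
  finally show ?thesis
    by (simp add: add_right_mono)
qed

lemma distribution_fun_dilate_restrict_le:
  assumes \<phi>: "antitone_nonneg \<phi>" and S: "S \<in> sets borel" "S \<subseteq> {0<..}"
    and thin: "\<And>x. 0 \<le> x \<Longrightarrow> emeasure lborel (S \<inter> {0<..x}) \<le> ennreal (x / 2)"
  shows "distribution_fun (\<lambda>x. \<phi> (x / 2) * indicator S x) s \<le> distribution_fun \<phi> s"
proof (cases "s < 0")
  case True
  then show ?thesis
    by (simp add: distribution_fun_neg)
next
  case False
  show ?thesis
  proof (cases "distribution_fun \<phi> s" rule: ennreal_cases)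
    case (real d)
    have "{x \<in> space M0. s < \<bar>\<phi> (x / 2) * indicator S x\<bar>} \<subseteq> S \<inter> {0<..2 * d}"
    proof
      fix x assume x: "x \<in> {x \<in> space M0. s < \<bar>\<phi> (x / 2) * indicator S x\<bar>}"
      then have "x \<in> S" "0 < x"
        using False by (auto split: split_indicator_asm)
      moreover have "0 \<le> \<phi> (x / 2)"
        using \<phi> \<open>0 < x\<close> by (simp add: antitone_nonneg_def)
      then have "s < \<phi> (x / 2)"
        using x \<open>x \<in> S\<close> by simp
      then have "ennreal (x / 2) \<le> ennreal d"
        using ennreal_le_distribution_fun[OF \<phi>, of "x / 2" s] \<open>0 < x\<close> real by simp
      then have "x / 2 \<le> d"
        using \<open>0 < x\<close> by (simp add: ennreal_le_iff2)
      ultimately show "x \<in> S \<inter> {0<..2 * d}"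
        by simp
    qed
    then have "distribution_fun (\<lambda>x. \<phi> (x / 2) * indicator S x) s \<le> emeasure M0 (S \<inter> {0<..2 * d})"
      unfolding distribution_fun_def by (rule emeasure_mono) (use S in \<open>auto intro: sets_M0_borel\<close>)
    also have "\<dots> = emeasure lborel (S \<inter> {0<..2 * d})"
      using S by (subst emeasure_M0) auto
    also have "\<dots> \<le> ennreal d"
      using thin[of "2 * d"] real by simp
    finally show ?thesis
      using real by simp
  qed simp
qed

context ri_space
begin

lemma dilate_restrict_mem:
  assumes \<phi>: "\<phi> \<in> X" "antitone_nonneg \<phi>" and e: "0 < e" and c: "1 \<le> c"
  shows "(\<lambda>x. \<phi> (x / 2) * indicator (alternating_intervals e c) x) \<in> X \<and>
    N (\<lambda>x. \<phi> (x / 2) * indicator (alternating_intervals e c) x) \<le> N \<phi>"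
proof (rule mem_if_distribution_le[OF \<phi>(1)])
  have "alternating_intervals e c \<in> sets M0"
    using e c by (intro sets_M0_borel alternating_intervals_borel alternating_intervals_pos)
  then show "(\<lambda>x. \<phi> (x / 2) * indicator (alternating_intervals e c) x) \<in> borel_measurable M0"
    using antitone_nonneg_measurable[OF antitone_nonneg_dilate[OF \<phi>(2)]] by measurable
  show "distribution_fun (\<lambda>x. \<phi> (x / 2) * indicator (alternating_intervals e c) x) s
      \<le> distribution_fun \<phi> s" for s
    using e c by (intro distribution_fun_dilate_restrict_le[OF \<phi>(2)] alternating_intervals_borel
        alternating_intervals_pos emeasure_alternating_intervals_le)
qed

lemma dilate_truncate_mem:
  assumes \<phi>: "\<phi> \<in> X" "antitone_nonneg \<phi>" and e: "0 < e"
  shows "(\<lambda>x. \<phi> (x / 2) * indicator {e..} x) \<in> X \<and> N (\<lambda>x. \<phi> (x / 2) * indicator {e..} x) \<le> 2 * N \<phi>"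
proof -
  let ?A = "alternating_intervals e 1" and ?B = "alternating_intervals e 2"
  let ?P = "\<lambda>x. \<phi> (x / 2) * indicator ?A x + \<phi> (x / 2) * indicator ?B x"
  have PX: "?P \<in> X" and PN: "N ?P \<le> 2 * N \<phi>"
    using add_mem N_triangle dilate_restrict_mem[OF \<phi> e, of 1] dilate_restrict_mem[OF \<phi> e, of 2]
    by fastforce+
  have "{e..} \<in> sets M0"
    using e by (intro sets_M0_borel) auto
  then have m: "(\<lambda>x. \<phi> (x / 2) * indicator {e..} x) \<in> borel_measurable M0"
    using antitone_nonneg_measurable[OF antitone_nonneg_dilate[OF \<phi>(2)]]
    by (intro borel_measurable_times borel_measurable_indicator)
  have "\<bar>\<phi> (x / 2) * indicator {e..} x\<bar> \<le> ?P x" if "0 < x" for x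
  proof -
    have \<phi>x: "0 \<le> \<phi> (x / 2)"
      using \<phi>(2) that by (simp add: antitone_nonneg_def)
    then have A: "0 \<le> \<phi> (x / 2) * indicator ?A x" and B: "0 \<le> \<phi> (x / 2) * indicator ?B x"
      by simp_all
    show ?thesis
    proof (cases "e \<le> x")
      case True
      then have "x \<in> ?A \<or> x \<in> ?B"
        using alternating_intervals_cover[OF e] by blast
      then have "\<phi> (x / 2) \<le> ?P x"
        using A B by auto
      then show ?thesis
        using True \<phi>x by simp
    next
      case False
      then show ?thesis
        using A B by simp
    qed
  qed
  then have "(\<lambda>x. \<phi> (x / 2) * indicator {e..} x) \<in> X \<and> N (\<lambda>x. \<phi> (x / 2) * indicator {e..} x) \<le> N ?P"
    by (rule dominated_mem_pointwise[OF m PX])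
  then show ?thesis
    using PN by simp
qed

lemma dilation_mem:
  assumes \<phi>: "\<phi> \<in> X" "antitone_nonneg \<phi>"
  shows "(\<lambda>x. \<phi> (x / 2)) \<in> X"
proof -
  let ?\<psi> = "\<lambda>x. \<phi> (x / 2)"
  define fs where "fs n x = ?\<psi> x * indicator {1 / real (Suc n)..} x" for n x
  have fs: "fs n \<in> X \<and> N (fs n) \<le> 2 * N \<phi>" for n
    unfolding fs_def by (rule dilate_truncate_mem[OF \<phi>]) simp
  have "?\<psi> \<in> X \<and> N ?\<psi> = (SUP n. N (fs n))"
  proof (rule fatou)
    show "\<forall>n. fs n \<in> X"
      using fs by blast
    show "?\<psi> \<in> borel_measurable M0"
      using \<phi>(2) by (intro antitone_nonneg_measurable antitone_nonneg_dilate)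
    show "AE x in M0. (\<forall>n. 0 \<le> fs n x \<and> fs n x \<le> fs (Suc n) x) \<and> (\<lambda>n. fs n x) \<longlonglongrightarrow> ?\<psi> x"
    proof (rule AE_I2)
      fix x assume "x \<in> space M0"
      then have x: "0 < x"
        by simp
      have "0 \<le> fs n x \<and> fs n x \<le> fs (Suc n) x" for n
      proof -
        have "1 / real (Suc (Suc n)) \<le> 1 / real (Suc n)"
          by (simp add: frac_le)
        moreover have "0 \<le> ?\<psi> x"
          using \<phi>(2) x by (simp add: antitone_nonneg_def)
        ultimately show ?thesis
          by (auto simp: fs_def split: split_indicator)
      qed
      moreover have "\<forall>\<^sub>F n in sequentially. fs n x = ?\<psi> x"
        using eventually_div_Suc_less[OF x, of 1] by eventually_elim (simp add: fs_def)
      then have "(\<lambda>n. fs n x) \<longlonglongrightarrow> ?\<psi> x"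
        by (rule tendsto_eventually)
      ultimately show "(\<forall>n. 0 \<le> fs n x \<and> fs n x \<le> fs (Suc n) x) \<and> (\<lambda>n. fs n x) \<longlonglongrightarrow> ?\<psi> x"
        by blast
    qed
    show "bounded (range (\<lambda>n. N (fs n)))"
      unfolding bounded_real using fs N_nonneg by (auto intro!: exI[of _ "2 * N \<phi>"])
  qed
  then show ?thesis
    by blast
qed

lemma dilated_rearrangement:
  assumes "u \<in> X"
  shows "(\<lambda>x. rearrangement u (x / 2)) \<in> X" "is_decr (\<lambda>x. rearrangement u (x / 2))"
proof -
  have um: "u \<in> borel_measurable M0" and uv: "distribution_vanishes u"
    using assms by (rule mem_measurable, rule distribution_vanishes_mem)
  show "(\<lambda>x. rearrangement u (x / 2)) \<in> X"
    using rearrangement_mem[OF assms uv] antitone_nonneg_rearrangement[OF uv] by (intro dilation_mem) auto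
  show "is_decr (\<lambda>x. rearrangement u (x / 2))"
    using is_decr_rearrangement[OF um uv] by (rule is_decr_dilate)
qed

end

section \<open>Integrability near zero\<close>

definition grid_interval :: "real \<Rightarrow> nat \<Rightarrow> real set" where
  "grid_interval h k = {real k * h <.. (real k + 1) * h}"

lemma sets_M0_grid_interval: "0 < h \<Longrightarrow> grid_interval h k \<in> sets M0"
  unfolding grid_interval_def by (rule sets_M0_Ioc) simp

lemma emeasure_grid_interval: "0 < h \<Longrightarrow> emeasure M0 (grid_interval h k) = ennreal h"
  unfolding grid_interval_def by (subst emeasure_M0_Ioc) (auto simp: algebra_simps)

lemma grid_interval_pos: "0 < h \<Longrightarrow> x \<in> grid_interval h k \<Longrightarrow> 0 < x"
  unfolding grid_interval_def by (auto intro: le_less_trans[of 0 "real k * h"])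

lemma grid_interval_unique:
  assumes h: "0 < h" and "x \<in> grid_interval h k" "x \<in> grid_interval h k'"
  shows "k = k'"
proof -
  from assms have "real k * h < x" "x \<le> (real k + 1) * h" "real k' * h < x" "x \<le> (real k' + 1) * h"
    by (auto simp: grid_interval_def)
  then have "real k * h < (real k' + 1) * h" "real k' * h < (real k + 1) * h"
    by linarith+
  then have "real k < real k' + 1" "real k' < real k + 1"
    using h by (simp_all add: mult_less_cancel_right)
  then show ?thesis
    by linarith
qed

lemma grid_interval_cover:
  assumes h: "0 < h" and x: "0 < x" "x \<le> real n * h"
  obtains k where "k < n" "x \<in> grid_interval h k"
proof
  define m where "m = \<lceil>x / h\<rceil>"
  have "0 < x / h"
    using h x by simp
  then have m1: "1 \<le> m"
    by (simp add: m_def)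
  have "real_of_int m - 1 < x / h" "x / h \<le> real_of_int m"
    unfolding m_def by linarith+
  then have "(real_of_int m - 1) * h < x" "x \<le> real_of_int m * h"
    using h by (simp_all add: field_simps)
  moreover have "real (nat m - 1) = real_of_int m - 1"
    using m1 by (simp add: of_nat_diff)
  ultimately show "x \<in> grid_interval h (nat m - 1)"
    by (simp add: grid_interval_def)
  have "x / h \<le> real n"
    using h x(2) by (simp add: field_simps)
  then have "m \<le> int n"
    by (simp add: m_def ceiling_le_iff)
  then show "nat m - 1 < n"
    using m1 by linarith
qed

lemma grid_interval_upper: "x \<in> grid_interval h k \<Longrightarrow> x \<le> h * real (k + 1)"
  by (simp add: grid_interval_def algebra_simps)

definition step_fun :: "real \<Rightarrow> nat \<Rightarrow> (nat \<Rightarrow> real) \<Rightarrow> real \<Rightarrow> real" where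
  "step_fun h n c x = (\<Sum>k<n. c k * indicator (grid_interval h k) x)"

lemma step_fun_measurable: "0 < h \<Longrightarrow> step_fun h n c \<in> borel_measurable M0"
  unfolding step_fun_def
  by (intro borel_measurable_sum borel_measurable_times borel_measurable_const
      borel_measurable_indicator sets_M0_grid_interval)

lemma step_fun_eq:
  assumes h: "0 < h" and k: "k < n" "x \<in> grid_interval h k"
  shows "step_fun h n c x = c k"
proof -
  have "step_fun h n c x = (\<Sum>j<n. if j = k then c j else 0)"
    unfolding step_fun_def using grid_interval_unique[OF h k(2)]
    by (intro sum.cong) (auto simp: k(2) split: split_indicator)
  also have "\<dots> = c k"
    using k(1) by simp
  finally show ?thesis .
qed

lemma step_fun_eq_0:
  assumes "0 < h" "real n * h < x"
  shows "step_fun h n c x = 0"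
  unfolding step_fun_def
proof (intro sum.neutral ballI)
  fix k assume "k \<in> {..<n}"
  then have "(real k + 1) * h \<le> real n * h"
    using assms(1) by (intro mult_right_mono) auto
  then have "x \<notin> grid_interval h k"
    using assms(2) by (simp add: grid_interval_def)
  then show "c k * indicator (grid_interval h k) x = 0"
    by simp
qed

lemma step_fun_nonneg: "(\<And>k. 0 \<le> c k) \<Longrightarrow> 0 \<le> step_fun h n c x"
  unfolding step_fun_def by (intro sum_nonneg mult_nonneg_nonneg) simp_all

lemma distribution_fun_step_fun_le:
  assumes h: "0 < h" and s: "0 \<le> s"
  shows "distribution_fun (step_fun h n c) s \<le> of_nat (card {k \<in> {..<n}. s < \<bar>c k\<bar>}) * ennreal h"
proof -
  let ?K = "{k \<in> {..<n}. s < \<bar>c k\<bar>}"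
  have "{x \<in> space M0. s < \<bar>step_fun h n c x\<bar>} \<subseteq> (\<Union>k\<in>?K. grid_interval h k)"
  proof
    fix x assume x: "x \<in> {x \<in> space M0. s < \<bar>step_fun h n c x\<bar>}"
    then have "x \<le> real n * h"
      using s step_fun_eq_0[OF h, of n x c] by (force simp: not_less[symmetric])
    then obtain k where "k < n" "x \<in> grid_interval h k"
      using grid_interval_cover[OF h] x by auto
    then show "x \<in> (\<Union>k\<in>?K. grid_interval h k)"
      using x step_fun_eq[OF h, of k n x c] by auto
  qed
  then have "distribution_fun (step_fun h n c) s \<le> emeasure M0 (\<Union>k\<in>?K. grid_interval h k)"
    unfolding distribution_fun_def by (rule emeasure_mono) (auto intro: sets_M0_grid_interval h)
  also have "\<dots> \<le> (\<Sum>k\<in>?K. emeasure M0 (grid_interval h k))"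
    by (rule emeasure_subadditive_finite) (auto intro: sets_M0_grid_interval h)
  also have "\<dots> = of_nat (card ?K) * ennreal h"
    by (simp add: emeasure_grid_interval[OF h])
  finally show ?thesis .
qed

lemma card_le_distribution_fun:
  assumes \<phi>: "antitone_nonneg \<phi>" and h: "0 < h"
  shows "of_nat (card {j \<in> {..<n}. s < \<phi> (h * real (j + 1))}) * ennreal h \<le> distribution_fun \<phi> s"
proof -
  let ?J = "{j \<in> {..<n}. s < \<phi> (h * real (j + 1))}"
  have "of_nat (card ?J) * ennreal h = (\<Sum>j\<in>?J. emeasure M0 (grid_interval h j))"
    by (simp add: emeasure_grid_interval[OF h])
  also have "\<dots> = emeasure M0 (\<Union>j\<in>?J. grid_interval h j)"
  proof (rule sum_emeasure)
    show "grid_interval h ` ?J \<subseteq> sets M0"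
      using sets_M0_grid_interval[OF h] by auto
    show "disjoint_family_on (grid_interval h) ?J"
      unfolding disjoint_family_on_def using grid_interval_unique[OF h] by blast
  qed simp
  also have "\<dots> \<le> distribution_fun \<phi> s"
    unfolding distribution_fun_def
  proof (rule emeasure_mono)
    show "(\<Union>j\<in>?J. grid_interval h j) \<subseteq> {x \<in> space M0. s < \<bar>\<phi> x\<bar>}"
    proof
      fix x assume "x \<in> (\<Union>j\<in>?J. grid_interval h j)"
      then obtain j where j: "s < \<phi> (h * real (j + 1))" "x \<in> grid_interval h j"
        by auto
      have x: "0 < x"
        using grid_interval_pos[OF h j(2)] .
      then have "\<phi> (h * real (j + 1)) \<le> \<phi> x" "0 \<le> \<phi> x"
        using \<phi> grid_interval_upper[OF j(2)] by (simp_all add: antitone_nonneg_def)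
      then show "x \<in> {x \<in> space M0. s < \<bar>\<phi> x\<bar>}"
        using j(1) x by simp
    qed
    show "{x \<in> space M0. s < \<bar>\<phi> x\<bar>} \<in> sets M0"
      by (rule sets_M0_level[OF antitone_nonneg_measurable[OF \<phi>]])
  qed
  finally show ?thesis .
qed

lemma rotate_eq_imp_eq:
  fixes k k' n i :: nat
  assumes "k \<le> k'" "k' < n" "(k + i) mod n = (k' + i) mod n"
  shows "k = k'"
proof (rule ccontr)
  assume "k \<noteq> k'"
  then have "0 < k' - k" "k' - k < n"
    using assms(1,2) by auto
  moreover have "n dvd k' - k"
    using mod_eq_dvd_iff_nat[of "k + i" "k' + i" n] assms by simp
  ultimately show False
    using nat_dvd_not_less by blast
qed

lemma bij_betw_rotate:
  fixes n i :: nat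
  shows "bij_betw (\<lambda>k. (k + i) mod n) {..<n} {..<n}"
proof (cases "n = 0")
  case False
  have "inj_on (\<lambda>k. (k + i) mod n) {..<n}"
  proof (rule inj_onI)
    fix k k' assume "k \<in> {..<n}" "k' \<in> {..<n}" "(k + i) mod n = (k' + i) mod n"
    then show "k = k'"
      using rotate_eq_imp_eq[of k k' n i] rotate_eq_imp_eq[of k' k n i] by (cases "k \<le> k'") auto
  qed
  moreover have "(\<lambda>k. (k + i) mod n) ` {..<n} \<subseteq> {..<n}"
    using False by auto
  ultimately show ?thesis
    by (simp add: bij_betw_def endo_inj_surj)
qed (simp add: bij_betw_def)

lemma sum_rotate:
  fixes n i :: nat
  shows "(\<Sum>k<n. F ((k + i) mod n)) = (\<Sum>k<n. F k)"
  by (rule sum.reindex_bij_betw[OF bij_betw_rotate])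

lemma card_rotate:
  fixes n i :: nat
  shows "card {k \<in> {..<n}. P ((k + i) mod n)} = card {k \<in> {..<n}. P k}"
  using sum_rotate[where F = "\<lambda>k. if P k then 1 else 0 :: nat" and n = n and i = i]
  by (simp add: sum.If_cases Int_def)

lemma sum_rotated_step_fun:
  assumes h: "0 < h" and x: "0 < x" "x \<le> real n * h"
  shows "(\<Sum>i<n. step_fun h n (\<lambda>k. c ((k + i) mod n)) x) = (\<Sum>k<n. c k)"
proof -
  obtain k where "k < n" "x \<in> grid_interval h k"
    using grid_interval_cover[OF h x] by blast
  then have "(\<Sum>i<n. step_fun h n (\<lambda>k. c ((k + i) mod n)) x) = (\<Sum>i<n. c ((i + k) mod n))"
    by (simp add: step_fun_eq[OF h] add.commute)
  also have "\<dots> = (\<Sum>k<n. c k)"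
    by (rule sum_rotate)
  finally show ?thesis .
qed

lemma antitone_le_step_sum:
  assumes \<phi>: "antitone_nonneg \<phi>" and h: "0 < h" and x: "0 < x"
  shows "ennreal (\<phi> x * indicator {h<..real n * h} x)
    \<le> (\<Sum>j<n. ennreal (\<phi> (h * real (j + 1))) * indicator (grid_interval h (j + 1)) x)"
proof (cases "x \<in> {h<..real n * h}")
  case True
  then obtain k where k: "k < n" "x \<in> grid_interval h k"
    using grid_interval_cover[OF h x] by auto
  moreover have "k \<noteq> 0"
  proof
    assume "k = 0"
    then have "x \<le> h"
      using k(2) by (simp add: grid_interval_def)
    then show False
      using True by simp
  qed
  ultimately obtain j where j: "k = j + 1" "j < n"
    by (cases k) auto
  have "h * real (j + 1) < x"
    using k(2) j(1) by (simp add: grid_interval_def algebra_simps)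
  then have "\<phi> x \<le> \<phi> (h * real (j + 1))"
    using \<phi> h by (simp add: antitone_nonneg_def)
  then have "ennreal (\<phi> x * indicator {h<..real n * h} x)
      \<le> ennreal (\<phi> (h * real (j + 1))) * indicator (grid_interval h (j + 1)) x"
    using True k(2) j(1) by (simp add: ennreal_leI)
  also have "\<dots> \<le> (\<Sum>j<n. ennreal (\<phi> (h * real (j + 1))) * indicator (grid_interval h (j + 1)) x)"
    by (rule member_le_sum) (use j(2) in auto)
  finally show ?thesis .
qed simp

lemma nn_integral_le_riemann_sum:
  assumes \<phi>: "antitone_nonneg \<phi>" and h: "0 < h"
  shows "(\<integral>\<^sup>+x. ennreal (\<phi> x * indicator {h<..real n * h} x) \<partial>M0)
    \<le> ennreal (h * (\<Sum>j<n. \<phi> (h * real (j + 1))))"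
proof -
  have c0: "0 \<le> \<phi> (h * real (j + 1))" for j
    using \<phi> h by (simp add: antitone_nonneg_def)
  have "(\<integral>\<^sup>+x. ennreal (\<phi> x * indicator {h<..real n * h} x) \<partial>M0)
      \<le> (\<integral>\<^sup>+x. (\<Sum>j<n. ennreal (\<phi> (h * real (j + 1))) * indicator (grid_interval h (j + 1)) x) \<partial>M0)"
    using antitone_le_step_sum[OF \<phi> h] by (intro nn_integral_mono) simp
  also have "\<dots> = (\<Sum>j<n. (\<integral>\<^sup>+x. ennreal (\<phi> (h * real (j + 1))) * indicator (grid_interval h (j + 1)) x \<partial>M0))"
    by (rule nn_integral_sum) (use sets_M0_grid_interval[OF h] in measurable)
  also have "\<dots> = (\<Sum>j<n. ennreal (\<phi> (h * real (j + 1))) * ennreal h)"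
    by (intro sum.cong refl, subst nn_integral_cmult_indicator)
      (simp_all add: sets_M0_grid_interval[OF h] emeasure_grid_interval[OF h])
  also have "\<dots> = ennreal (h * (\<Sum>j<n. \<phi> (h * real (j + 1))))"
    using c0 h by (simp add: ennreal_mult'' sum_distrib_left mult.commute flip: sum_ennreal)
  finally show ?thesis .
qed

lemma SUP_indicator_Ioc_div_Suc:
  fixes a :: real
  assumes \<tau>: "0 < \<tau>"
  shows "(SUP m. ennreal (a * indicator {\<tau> / real (Suc m)<..\<tau>} x)) = ennreal (a * indicator {0<..\<tau>} x)"
proof (cases "x \<in> {0<..\<tau>}")
  case True
  then obtain M where "\<tau> / real (Suc M) < x"
    using eventually_div_Suc_less[of x \<tau>] unfolding eventually_sequentially by auto
  then have "ennreal (a * indicator {\<tau> / real (Suc M)<..\<tau>} x) = ennreal (a * indicator {0<..\<tau>} x)"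
    using True by simp
  moreover have "ennreal (a * indicator {\<tau> / real (Suc m)<..\<tau>} x) \<le> ennreal (a * indicator {0<..\<tau>} x)" for m
    using True by (cases "x \<in> {\<tau> / real (Suc m)<..\<tau>}") auto
  ultimately show ?thesis
    by (intro antisym SUP_least) (auto intro: SUP_upper2[where i = M])
next
  case False
  have "0 < \<tau> / real (Suc m)" for m
    using \<tau> by simp
  then have "x \<notin> {\<tau> / real (Suc m)<..\<tau>}" for m
    using False by (meson greaterThanAtMost_iff less_trans)
  then show ?thesis
    using False by simp
qed

lemma nn_integral_Ioc_eq_SUP:
  assumes \<phi>: "antitone_nonneg \<phi>" and \<tau>: "0 < \<tau>"
  shows "(\<integral>\<^sup>+x. ennreal (\<phi> x * indicator {0<..\<tau>} x) \<partial>M0)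
    = (SUP m. \<integral>\<^sup>+x. ennreal (\<phi> x * indicator {\<tau> / real (Suc m)<..\<tau>} x) \<partial>M0)"
proof -
  define F where "F m x = ennreal (\<phi> x * indicator {\<tau> / real (Suc m)<..\<tau>} x)" for m x
  have inc: "incseq F"
  proof (rule incseq_SucI, rule le_funI)
    fix m x
    have "\<tau> / real (Suc (Suc m)) \<le> \<tau> / real (Suc m)"
      using \<tau> by (intro divide_left_mono) auto
    then show "F m x \<le> F (Suc m) x"
      unfolding F_def by (cases "x \<in> {\<tau> / real (Suc m)<..\<tau>}") (auto intro: ennreal_leI)
  qed
  have meas: "F m \<in> borel_measurable M0" for m
  proof -
    have "{\<tau> / real (Suc m)<..\<tau>} \<in> sets M0"
      using \<tau> by (intro sets_M0_Ioc) simp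
    then show ?thesis
      unfolding F_def using antitone_nonneg_measurable[OF \<phi>] by measurable
  qed
  have "(\<integral>\<^sup>+x. ennreal (\<phi> x * indicator {0<..\<tau>} x) \<partial>M0) = (\<integral>\<^sup>+x. (SUP m. F m x) \<partial>M0)"
    unfolding F_def by (simp only: SUP_indicator_Ioc_div_Suc[OF \<tau>])
  also have "\<dots> = (SUP m. integral\<^sup>N M0 (F m))"
    by (rule nn_integral_monotone_convergence_SUP[OF inc meas])
  finally show ?thesis
    by (simp only: F_def[abs_def])
qed

context ri_space
begin

lemma indicator_Ioc_mem:
  assumes \<phi>: "\<phi> \<in> X" "antitone_nonneg \<phi>" and \<tau>: "0 < \<tau>" "0 < \<phi> \<tau>"
  shows "indicator {0<..\<tau>} \<in> X"
proof -
  have "(\<lambda>x. \<phi> \<tau> * indicator {0<..\<tau>} x) \<in> X"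
    using \<phi> \<tau> sets_M0_Ioc[of 0 \<tau>]
    by (intro conjunct1[OF dominated_mem_pointwise[OF _ \<phi>(1)]])
      (auto simp: antitone_nonneg_def split: split_indicator)
  then have "(\<lambda>x. inverse (\<phi> \<tau>) * (\<phi> \<tau> * indicator {0<..\<tau>} x)) \<in> X"
    by (rule scale_mem)
  moreover have "(\<lambda>x. inverse (\<phi> \<tau>) * (\<phi> \<tau> * indicator {0<..\<tau>} x)) = indicator {0<..\<tau>}"
    using \<tau>(2) by auto
  ultimately show ?thesis
    by simp
qed

lemma rotated_step_fun_mem:
  assumes \<phi>: "\<phi> \<in> X" "antitone_nonneg \<phi>" and h: "0 < h"
  shows "step_fun h n (\<lambda>k. \<phi> (h * real ((k + i) mod n + 1))) \<in> X \<and>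
    N (step_fun h n (\<lambda>k. \<phi> (h * real ((k + i) mod n + 1)))) \<le> N \<phi>"
proof (rule mem_if_distribution_le[OF \<phi>(1) step_fun_measurable[OF h]])
  let ?c = "\<lambda>j. \<phi> (h * real (j + 1))"
  have c0: "0 \<le> ?c j" for j
    using \<phi>(2) h by (simp add: antitone_nonneg_def)
  fix s
  show "distribution_fun (step_fun h n (\<lambda>k. ?c ((k + i) mod n))) s \<le> distribution_fun \<phi> s"
  proof (cases "s < 0")
    case True
    then show ?thesis
      by (simp add: distribution_fun_neg)
  next
    case False
    then have "distribution_fun (step_fun h n (\<lambda>k. ?c ((k + i) mod n))) s
        \<le> of_nat (card {k \<in> {..<n}. s < \<bar>?c ((k + i) mod n)\<bar>}) * ennreal h"
      using h by (intro distribution_fun_step_fun_le) simp_all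
    also have "card {k \<in> {..<n}. s < \<bar>?c ((k + i) mod n)\<bar>} = card {j \<in> {..<n}. s < ?c j}"
      using card_rotate[where P = "\<lambda>j. s < \<bar>?c j\<bar>" and n = n and i = i] c0 by simp
    also have "of_nat \<dots> * ennreal h \<le> distribution_fun \<phi> s"
      by (rule card_le_distribution_fun[OF \<phi>(2) h])
    finally show ?thesis .
  qed
qed

text \<open>Averaging the \<open>n\<close> cyclic shifts of the step function with values \<open>\<phi>(h), \<phi>(2h), \<dots>, \<phi>(nh)\<close>:
  each shift is dominated by \<open>\<phi>\<close> in distribution, and their sum is the constant \<open>\<Sum>\<^sub>j \<phi>(jh)\<close> on
  \<open>(0, nh]\<close>.\<close>

lemma riemann_sum_le:
  assumes \<phi>: "\<phi> \<in> X" "antitone_nonneg \<phi>" and h: "0 < h" and chi: "indicator {0<..real n * h} \<in> X"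
  shows "(\<Sum>j<n. \<phi> (h * real (j + 1))) * N (indicator {0<..real n * h}) \<le> real n * N \<phi>"
proof -
  let ?c = "\<lambda>j. \<phi> (h * real (j + 1))" and ?chi = "indicator {0<..real n * h} :: real \<Rightarrow> real"
  let ?R = "\<lambda>i. step_fun h n (\<lambda>k. ?c ((k + i) mod n))"
  have c0: "0 \<le> ?c j" for j
    using \<phi>(2) h by (simp add: antitone_nonneg_def)
  then have C0: "0 \<le> (\<Sum>j<n. ?c j)"
    by (rule sum_nonneg)
  have R: "?R i \<in> X \<and> N (?R i) \<le> N \<phi>" for i
    using rotated_step_fun_mem[OF \<phi> h] by simp
  have S: "(\<lambda>x. \<Sum>i<n. ?R i x) \<in> X" "N (\<lambda>x. \<Sum>i<n. ?R i x) \<le> real n * N \<phi>"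
    using sum_mem[of n ?R] R sum_mono[of "{..<n}" "\<lambda>i. N (?R i)" "\<lambda>_. N \<phi>"] by auto
  have "(\<lambda>x. (\<Sum>j<n. ?c j) * ?chi x) \<in> X \<and> N (\<lambda>x. (\<Sum>j<n. ?c j) * ?chi x) \<le> N (\<lambda>x. \<Sum>i<n. ?R i x)"
  proof (rule dominated_mem_pointwise[OF _ S(1)])
    show "(\<lambda>x. (\<Sum>j<n. ?c j) * ?chi x) \<in> borel_measurable M0"
      using mem_measurable[OF chi] by measurable
    show "\<bar>(\<Sum>j<n. ?c j) * ?chi x\<bar> \<le> (\<Sum>i<n. ?R i x)" if "0 < x" for x
    proof (cases "x \<le> real n * h")
      case True
      then show ?thesis
        using sum_rotated_step_fun[OF h that True, of ?c] that C0 by simp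
    next
      case False
      then show ?thesis
        using c0 by (simp add: sum_nonneg step_fun_nonneg)
    qed
  qed
  then show ?thesis
    using N_scale[OF chi, of "\<Sum>j<n. ?c j"] C0 S(2) by simp
qed

lemma nn_integral_Ioc_finite:
  assumes \<phi>: "\<phi> \<in> X" "antitone_nonneg \<phi>" and \<tau>: "0 < \<tau>" "0 < \<phi> \<tau>"
  shows "(\<integral>\<^sup>+x. ennreal (\<phi> x * indicator {0<..\<tau>} x) \<partial>M0) < \<infinity>"
proof -
  let ?chi = "indicator {0<..\<tau>} :: real \<Rightarrow> real"
  have chi: "?chi \<in> X"
    using \<phi> \<tau> by (rule indicator_Ioc_mem)
  have "N ?chi \<noteq> 0"
    using N_eq_0_iff[OF chi] not_AE_M0_indicator_Ioc_zero[OF \<tau>(1)] by simp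
  then have Nchi: "0 < N ?chi"
    using N_nonneg[OF chi] by simp
  have "(\<integral>\<^sup>+x. ennreal (\<phi> x * indicator {\<tau> / real (Suc m)<..\<tau>} x) \<partial>M0) \<le> ennreal (\<tau> * N \<phi> / N ?chi)"
    for m
  proof -
    define h where "h = \<tau> / real (Suc m)"
    have h: "0 < h" and nh: "real (Suc m) * h = \<tau>"
      using \<tau> by (simp_all add: h_def)
    have "indicator {0<..real (Suc m) * h} \<in> X"
      using chi by (simp only: nh)
    then have "(\<Sum>j<Suc m. \<phi> (h * real (j + 1))) * N (indicator {0<..real (Suc m) * h})
        \<le> real (Suc m) * N \<phi>"
      by (rule riemann_sum_le[OF \<phi> h])
    then have "(\<Sum>j<Suc m. \<phi> (h * real (j + 1))) \<le> real (Suc m) * N \<phi> / N ?chi"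
      using Nchi by (simp only: nh pos_le_divide_eq)
    then have "h * (\<Sum>j<Suc m. \<phi> (h * real (j + 1))) \<le> h * (real (Suc m) * N \<phi> / N ?chi)"
      using h by (intro mult_left_mono) auto
    also have "\<dots> = (real (Suc m) * h) * N \<phi> / N ?chi"
      by (simp add: mult_ac)
    also have "\<dots> = \<tau> * N \<phi> / N ?chi"
      by (simp only: nh)
    finally have "ennreal (h * (\<Sum>j<Suc m. \<phi> (h * real (j + 1)))) \<le> ennreal (\<tau> * N \<phi> / N ?chi)"
      by (rule ennreal_leI)
    with nn_integral_le_riemann_sum[OF \<phi>(2) h, of "Suc m"]
    have "(\<integral>\<^sup>+x. ennreal (\<phi> x * indicator {h<..real (Suc m) * h} x) \<partial>M0) \<le> ennreal (\<tau> * N \<phi> / N ?chi)"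
      by (rule order_trans)
    then have "(\<integral>\<^sup>+x. ennreal (\<phi> x * indicator {h<..\<tau>} x) \<partial>M0) \<le> ennreal (\<tau> * N \<phi> / N ?chi)"
      by (simp only: nh)
    then show ?thesis
      by (simp only: h_def)
  qed
  then have "(\<integral>\<^sup>+x. ennreal (\<phi> x * indicator {0<..\<tau>} x) \<partial>M0) \<le> ennreal (\<tau> * N \<phi> / N ?chi)"
    by (simp add: nn_integral_Ioc_eq_SUP[OF \<phi>(2) \<tau>(1)] SUP_least)
  then show ?thesis
    by (rule le_less_trans) simp
qed

lemma nn_integral_unit_interval_finite:
  assumes \<phi>: "\<phi> \<in> X" "antitone_nonneg \<phi>"
  shows "(\<integral>\<^sup>+x. ennreal (\<phi> x * indicator {0<..1} x) \<partial>M0) < \<infinity>"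
proof (cases "\<exists>\<tau>\<in>{0<..1}. 0 < \<phi> \<tau>")
  case True
  then obtain \<tau> where \<tau>: "0 < \<tau>" "\<tau> \<le> 1" "0 < \<phi> \<tau>"
    by auto
  have "ennreal (\<phi> x * indicator {0<..1} x)
      \<le> ennreal (\<phi> x * indicator {0<..\<tau>} x) + ennreal (\<phi> \<tau>) * indicator {\<tau><..1} x" if "0 < x" for x
  proof (cases "x \<le> \<tau>")
    case True
    then show ?thesis
      using that \<tau> by (auto split: split_indicator)
  next
    case False
    then have "\<phi> x \<le> \<phi> \<tau>"
      using \<phi>(2) \<tau> by (simp add: antitone_nonneg_def)
    then show ?thesis
      using that False by (auto split: split_indicator intro: ennreal_leI)
  qed
  then have "(\<integral>\<^sup>+x. ennreal (\<phi> x * indicator {0<..1} x) \<partial>M0)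
      \<le> (\<integral>\<^sup>+x. ennreal (\<phi> x * indicator {0<..\<tau>} x) + ennreal (\<phi> \<tau>) * indicator {\<tau><..1} x \<partial>M0)"
    by (intro nn_integral_mono) simp
  also have "\<dots> = (\<integral>\<^sup>+x. ennreal (\<phi> x * indicator {0<..\<tau>} x) \<partial>M0) + ennreal (\<phi> \<tau>) * emeasure M0 {\<tau><..1}"
    using antitone_nonneg_measurable[OF \<phi>(2)] sets_M0_Ioc[of 0 \<tau>] sets_M0_Ioc[of \<tau> 1] \<tau>
    by (subst nn_integral_add) (auto simp: nn_integral_cmult_indicator)
  also have "\<dots> < \<infinity>"
    using nn_integral_Ioc_finite[OF \<phi> \<tau>(1,3)] \<tau> by (simp add: emeasure_M0_Ioc ennreal_mult_less_top)
  finally show ?thesis .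
next
  case False
  have "ennreal (\<phi> x * indicator {0<..1} x) = 0" if "0 < x" for x
  proof (cases "x \<le> 1")
    case True
    then have "\<phi> x \<le> 0"
      using False that by (simp add: not_less)
    then show ?thesis
      by (simp add: ennreal_eq_0_iff mult_nonpos_nonneg)
  qed simp
  then have "(\<integral>\<^sup>+x. ennreal (\<phi> x * indicator {0<..1} x) \<partial>M0) = (\<integral>\<^sup>+x. 0 \<partial>M0)"
    by (intro nn_integral_cong) simp
  then show ?thesis
    by simp
qed

lemma integrable_min_supported:
  assumes H: "H \<in> X" "antitone_nonneg H"
    and f: "f \<in> borel_measurable M0" "\<And>x. 0 < x \<Longrightarrow> 0 \<le> f x" "\<And>x. 1 < x \<Longrightarrow> f x = 0"
  shows "integrable M0 (\<lambda>x. min (H x) (f x))"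
proof (rule integrableI_bounded)
  show "(\<lambda>x. min (H x) (f x)) \<in> borel_measurable M0"
    using f(1) mem_measurable[OF H(1)] by measurable
  have "ennreal (norm (min (H x) (f x))) \<le> ennreal (H x * indicator {0<..1} x)" if "0 < x" for x
    using that H(2) f(2,3)[of x] by (cases "x \<le> 1") (auto simp: antitone_nonneg_def intro: ennreal_leI)
  then have "(\<integral>\<^sup>+x. ennreal (norm (min (H x) (f x))) \<partial>M0) \<le> (\<integral>\<^sup>+x. ennreal (H x * indicator {0<..1} x) \<partial>M0)"
    by (intro nn_integral_mono) simp
  also have "\<dots> < \<infinity>"
    using H by (rule nn_integral_unit_interval_finite)
  finally show "(\<integral>\<^sup>+x. ennreal (norm (min (H x) (f x))) \<partial>M0) < \<infinity>" .
qed

end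

section \<open>Balanced majorants\<close>

lemma le_sqrt_mult_balanced:
  fixes a g h :: real
  assumes a: "0 \<le> a" and g: "0 \<le> g" and h: "0 \<le> h" and le: "a \<le> sqrt g * sqrt h"
  shows "a \<le> sqrt (g + min h a) * sqrt (min h (g + min h a))"
proof -
  define G where "G = g + min h a"
  define H where "H = min h G"
  have G: "0 \<le> G" "g \<le> G" and H: "0 \<le> H"
    using a g h by (auto simp: G_def H_def)
  have "a * a \<le> (sqrt g * sqrt h) * (sqrt g * sqrt h)"
    using le a by (intro mult_mono) auto
  also have "\<dots> = g * h"
    using g h by (simp add: algebra_simps)
  finally have aa: "a * a \<le> g * h" .
  have "a * a \<le> G * H"
  proof (cases "h \<le> G")
    case True
    then have "H = h"
      by (simp add: H_def)
    moreover have "g * h \<le> G * h"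
      using G h by (intro mult_right_mono) auto
    ultimately show ?thesis
      using aa by simp
  next
    case False
    then have "H = G" and "a \<le> G"
      using g by (auto simp: H_def G_def min_def split: if_splits)
    then show ?thesis
      using a by (simp add: mult_mono)
  qed
  then have "a \<le> sqrt (G * H)"
    by (intro real_le_rsqrt) (simp add: power2_eq_square)
  then show ?thesis
    using G H by (simp add: real_sqrt_mult G_def H_def)
qed

context ri_space
begin

lemma min_mem:
  assumes "H \<in> X" "f \<in> borel_measurable M0" "\<And>x. 0 < x \<Longrightarrow> 0 \<le> H x \<and> 0 \<le> f x"
  shows "(\<lambda>x. min (H x) (f x)) \<in> X"
  using assms mem_measurable[OF assms(1)] by (intro conjunct1[OF dominated_mem_pointwise[OF _ assms(1)]]) auto

end

lemma decreasing_majorants: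
  assumes Y: "ri_space Y NY" and Z: "ri_space Z NZ" and f: "is_decr f" "f \<in> CL Y Z"
  obtains G H where "G \<in> Y" "is_decr G" "H \<in> Z" "is_decr H"
    "\<And>x. 0 < x \<Longrightarrow> f x \<le> sqrt (G x) * sqrt (H x)"
proof -
  obtain g h where g: "g \<in> Y" and h: "h \<in> Z"
    and ae: "AE x in M0. 0 \<le> g x \<and> 0 \<le> h x \<and> \<bar>f x\<bar> \<le> sqrt (g x) * sqrt (h x)"
    using f(2) by (auto simp: CL_def)
  show ?thesis
  proof
    show "(\<lambda>x. rearrangement g (x / 2)) \<in> Y" "is_decr (\<lambda>x. rearrangement g (x / 2))"
      using ri_space.dilated_rearrangement[OF Y g] by simp_all
    show "(\<lambda>x. rearrangement h (x / 2)) \<in> Z" "is_decr (\<lambda>x. rearrangement h (x / 2))"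
      using ri_space.dilated_rearrangement[OF Z h] by simp_all
    show "f x \<le> sqrt (rearrangement g (x / 2)) * sqrt (rearrangement h (x / 2))" if "0 < x" for x
      using ri_space.mem_measurable[OF Y g] ri_space.mem_measurable[OF Z h]
        ri_space.distribution_vanishes_mem[OF Y g] ri_space.distribution_vanishes_mem[OF Z h]
      by (intro is_decr_le_sqrt_rearrangements[OF f(1) _ _ _ _ ae that])
  qed
qed

lemma balanced_factorization:
  assumes Y: "ri_space Y NY" and Z: "ri_space Z NZ" and f: "is_decr f" "f \<in> CL Y Z"
    and truncation: "\<And>H0. H0 \<in> Z \<Longrightarrow> is_decr H0 \<Longrightarrow> (\<lambda>x. min (H0 x) (f x)) \<in> Y"
  obtains G H where "G \<in> Y" "is_decr G" "H \<in> Z" "is_decr H"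
    "\<And>x. 0 < x \<Longrightarrow> f x \<le> sqrt (G x) * sqrt (H x) \<and> H x \<le> G x"
proof -
  obtain G0 H0 where G0: "G0 \<in> Y" "is_decr G0" and H0: "H0 \<in> Z" "is_decr H0"
    and le: "\<And>x. 0 < x \<Longrightarrow> f x \<le> sqrt (G0 x) * sqrt (H0 x)"
    using decreasing_majorants[OF Y Z f] by blast
  define G where "G x = G0 x + min (H0 x) (f x)" for x
  define H where "H x = min (H0 x) (G x)" for x
  have GY: "G \<in> Y"
    unfolding G_def using ri_space.add_mem[OF Y G0(1) truncation[OF H0]] .
  have dG: "is_decr G"
    using G0(2) H0(2) f(1) unfolding is_decr_def G_def
    by (auto intro!: continuous_intros add_mono min.mono)
  have dH: "is_decr H"
    using dG H0(2) unfolding is_decr_def H_def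
    by (auto intro!: continuous_intros simp: min_le_iff_disj)
  have HZ: "H \<in> Z"
  proof (rule conjunct1[OF ri_space.dominated_mem_pointwise[OF Z _ H0(1)]])
    show "H \<in> borel_measurable M0"
      unfolding H_def using ri_space.mem_measurable[OF Z H0(1)] ri_space.mem_measurable[OF Y GY]
      by measurable
    show "\<bar>H x\<bar> \<le> H0 x" if "0 < x" for x
      using dH that by (simp add: is_decr_def H_def)
  qed
  show ?thesis
  proof (rule that[OF GY dG HZ dH], intro conjI)
    fix x :: real assume "0 < x"
    then have "0 \<le> f x" "0 \<le> G0 x" "0 \<le> H0 x"
      using f(1) G0(2) H0(2) by (simp_all add: is_decr_def)
    then show "f x \<le> sqrt (G x) * sqrt (H x)"
      unfolding H_def G_def using le_sqrt_mult_balanced le[OF \<open>0 < x\<close>] by blast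
    show "H x \<le> G x"
      by (simp add: H_def)
  qed
qed

section \<open>Step functions\<close>

text \<open>Rounds down to an integer, except on \<open>(0, 1)\<close>, where \<open>0\<close> lies outside the domain; the point
  \<open>1/2\<close> is chosen so that \<open>x/2 \<le> step_point x\<close>.\<close>

definition step_point :: "real \<Rightarrow> real" where
  "step_point x = max (1 / 2) (of_int \<lfloor>x\<rfloor>)"

lemma step_point_pos: "0 < step_point x"
  by (simp add: step_point_def)

lemma step_point_mono: "x \<le> y \<Longrightarrow> step_point x \<le> step_point y"
  unfolding step_point_def by (intro max.mono floor_mono order_refl) (simp add: floor_mono)

lemma half_le_step_point:
  assumes "0 < x"
  shows "x / 2 \<le> step_point x"
proof (cases "x < 1")
  case False
  then have "1 \<le> \<lfloor>x\<rfloor>"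
    by simp
  then have "x / 2 \<le> of_int \<lfloor>x\<rfloor>"
    by linarith
  then show ?thesis
    by (simp add: step_point_def)
qed (simp add: step_point_def)

lemma floor_step_point:
  assumes "0 < x"
  shows "\<lfloor>step_point x\<rfloor> = \<lfloor>x\<rfloor>"
proof (cases "x < 1")
  case True
  then have "\<lfloor>x\<rfloor> = 0"
    using assms by (simp add: floor_eq_iff)
  moreover have "\<lfloor>1 / 2 :: real\<rfloor> = 0"
    by (simp add: floor_eq_iff)
  ultimately show ?thesis
    by (simp add: step_point_def)
next
  case False
  then have "1 \<le> \<lfloor>x\<rfloor>"
    by simp
  then have "(1 :: real) \<le> of_int \<lfloor>x\<rfloor>"
    by (metis of_int_1 of_int_le_iff)
  then have "step_point x = of_int \<lfloor>x\<rfloor>"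
    unfolding step_point_def by (intro max_absorb2) linarith
  then show ?thesis
    by simp
qed

lemma step_point_eventually_const:
  "\<forall>\<^sub>F y in at_right x. step_point y = step_point x"
  unfolding eventually_at_right_field
proof (intro exI[of _ "of_int \<lfloor>x\<rfloor> + 1"] conjI allI impI)
  show "x < of_int \<lfloor>x\<rfloor> + 1"
    by linarith
  fix y assume "x < y" "y < of_int \<lfloor>x\<rfloor> + 1"
  then have "\<lfloor>y\<rfloor> = \<lfloor>x\<rfloor>"
    by (simp add: floor_eq_iff) linarith
  then show "step_point y = step_point x"
    by (simp add: step_point_def)
qed

lemma is_decr_comp_step_point:
  assumes "is_decr G"
  shows "is_decr (\<lambda>x. G (step_point x))"
  unfolding is_decr_def
proof (intro conjI allI impI)
  fix x :: real assume "0 < x"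
  show "continuous (at_right x) (\<lambda>x. G (step_point x))"
    unfolding continuous_within using step_point_eventually_const[of x]
    by (intro tendsto_eventually) (auto elim: eventually_mono)
next
  fix x y :: real assume "0 < x" "x \<le> y"
  then show "G (step_point y) \<le> G (step_point x)"
    using assms step_point_pos[of x] step_point_mono[of x y] by (simp add: is_decr_def)
qed (use assms step_point_pos in \<open>simp add: is_decr_def\<close>)

lemma step_form_comp_step_point: "step_form (\<lambda>x. G (step_point x))"
  unfolding step_form_def
proof (intro exI[of _ "\<lambda>k. G (max (1 / 2) (real k - 1))"] allI impI)
  fix x :: real assume "0 < x"
  then have "real (nat \<lfloor>x\<rfloor> + 1) - 1 = of_int \<lfloor>x\<rfloor>"
    by simp
  then show "G (step_point x) = G (max (1 / 2) (real (nat \<lfloor>x\<rfloor> + 1) - 1))"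
    by (simp add: step_point_def)
qed

lemma step_form_comp_step_point_eq:
  assumes "step_form f" "0 < x"
  shows "f (step_point x) = f x"
  using assms step_point_pos[of x] floor_step_point[of x] by (auto simp: step_form_def)

lemma step_form_le_half:
  assumes "is_decr f" "step_form f" "0 < x"
  shows "f x \<le> f (1 / 2)"
proof -
  have "1 / 2 \<le> step_point x"
    by (simp add: step_point_def)
  then have "f (step_point x) \<le> f (1 / 2)"
    using assms(1) by (simp add: is_decr_def)
  then show ?thesis
    using step_form_comp_step_point_eq[OF assms(2,3)] by simp
qed

lemma (in ri_space) comp_step_point_mem:
  assumes "G \<in> X" "is_decr G"
  shows "(\<lambda>x. G (step_point x)) \<in> X"
proof (rule conjunct1[OF dominated_mem_pointwise])
  show "(\<lambda>x. G (step_point x)) \<in> borel_measurable M0"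
    using is_decr_comp_step_point[OF assms(2)]
    by (intro antitone_nonneg_measurable is_decr_antitone_nonneg)
  show "(\<lambda>x. G (x / 2)) \<in> X"
    using assms by (intro dilation_mem is_decr_antitone_nonneg)
  show "\<bar>G (step_point x)\<bar> \<le> G (x / 2)" if "0 < x" for x
    using assms(2) that half_le_step_point[OF that] step_point_pos[of x] by (simp add: is_decr_def)
qed

lemma step_majorants:
  assumes Y: "ri_space Y NY" and Z: "ri_space Z NZ"
    and G: "G \<in> Y" "is_decr G" and H: "H \<in> Z" "is_decr H" and f: "step_form f"
    and GH: "\<And>x. 0 < x \<Longrightarrow> f x \<le> sqrt (G x) * sqrt (H x) \<and> H x \<le> G x"
  shows "\<exists>g h. is_decr g \<and> g \<in> Y \<and> step_form g \<and> is_decr h \<and> h \<in> Z \<and> step_form h \<and>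
    (\<forall>x>0. f x \<le> sqrt (g x) * sqrt (h x) \<and> h x \<le> g x)"
proof -
  let ?g = "\<lambda>x. G (step_point x)" and ?h = "\<lambda>x. H (step_point x)"
  have "f x \<le> sqrt (?g x) * sqrt (?h x) \<and> ?h x \<le> ?g x" if "0 < x" for x
    using GH[OF step_point_pos, of x] step_form_comp_step_point_eq[OF f that] by simp
  moreover have "is_decr ?g" "?g \<in> Y" "is_decr ?h" "?h \<in> Z"
    using G H by (simp_all add: is_decr_comp_step_point ri_space.comp_step_point_mem[OF Y]
        ri_space.comp_step_point_mem[OF Z])
  ultimately show ?thesis
    using step_form_comp_step_point by blast
qed

section \<open>Bounded and integrable truncations\<close>

lemma bounded_mem_Linf:
  "u \<in> borel_measurable M0 \<Longrightarrow> (\<And>x. 0 < x \<Longrightarrow> \<bar>u x\<bar> \<le> C) \<Longrightarrow> u \<in> Linf"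
  unfolding Linf_def by (auto intro!: exI[of _ C] AE_I2)

lemma truncation_mem_Linf:
  assumes Z: "ri_space Z NZ" and H0: "H0 \<in> Z" "is_decr H0"
    and f: "is_decr f" "f \<in> borel_measurable M0" "step_form f"
  shows "(\<lambda>x. min (H0 x) (f x)) \<in> Z \<inter> Linf"
proof -
  have "(\<lambda>x. min (H0 x) (f x)) \<in> Z"
    using H0 f by (intro ri_space.min_mem[OF Z]) (simp_all add: is_decr_def)
  moreover have "\<bar>min (H0 x) (f x)\<bar> \<le> f (1 / 2)" if "0 < x" for x
    using H0(2) f(1) step_form_le_half[OF f(1,3) that] that by (simp add: is_decr_def)
  ultimately show ?thesis
    using ri_space.mem_measurable[OF Z] bounded_mem_Linf by blast
qed

lemma truncation_mem_L1:
  assumes Z: "ri_space Z NZ" and H0: "H0 \<in> Z" "is_decr H0"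
    and f: "is_decr f" "f \<in> borel_measurable M0" "\<And>x. 1 < x \<Longrightarrow> f x = 0"
  shows "(\<lambda>x. min (H0 x) (f x)) \<in> Z \<inter> L1"
proof -
  have "(\<lambda>x. min (H0 x) (f x)) \<in> Z"
    using H0 f by (intro ri_space.min_mem[OF Z]) (simp_all add: is_decr_def)
  moreover have "integrable M0 (\<lambda>x. min (H0 x) (f x))"
    using H0 f by (intro ri_space.integrable_min_supported[OF Z] is_decr_antitone_nonneg)
      (simp_all add: is_decr_def)
  ultimately show ?thesis
    by (simp add: L1_def)
qed

theorem lemma5p1:
  fixes Y Z :: "(real \<Rightarrow> real) set" and NY NZ :: "(real \<Rightarrow> real) \<Rightarrow> real"
  assumes "ri_bfs Y NY" and "ri_bfs Z NZ"
  shows "(Z \<inter> Linf \<subseteq> Y \<inter> Linf \<longrightarrow>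
           (\<forall>f. is_decr f \<and> f \<in> CL Y Z \<and> step_form f \<longrightarrow>
              (\<exists>g h. is_decr g \<and> g \<in> Y \<and> step_form g \<and> is_decr h \<and> h \<in> Z \<and> step_form h \<and>
                 (\<forall>x>0. f x \<le> sqrt (g x) * sqrt (h x) \<and> h x \<le> g x))))
       \<and> (Z \<inter> L1 \<subseteq> Y \<inter> L1 \<longrightarrow>
           (\<forall>f. is_decr f \<and> f \<in> CL Y Z \<and> (\<forall>x>1. f x = 0) \<longrightarrow>
              (\<exists>g h. is_decr g \<and> g \<in> Y \<and> is_decr h \<and> h \<in> Z \<and>
                 (\<forall>x>0. f x \<le> sqrt (g x) * sqrt (h x) \<and> h x \<le> g x))))"
proof (intro conjI impI allI)
  have Y: "ri_space Y NY" and Z: "ri_space Z NZ"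
    using assms by (simp_all add: ri_space_def)
  {
    fix f assume inc: "Z \<inter> Linf \<subseteq> Y \<inter> Linf" and "is_decr f \<and> f \<in> CL Y Z \<and> step_form f"
    then have f: "is_decr f" "f \<in> CL Y Z" "f \<in> borel_measurable M0" and step: "step_form f"
      by (simp_all add: CL_def)
    obtain G H where "G \<in> Y" "is_decr G" "H \<in> Z" "is_decr H"
      and "\<And>x. 0 < x \<Longrightarrow> f x \<le> sqrt (G x) * sqrt (H x) \<and> H x \<le> G x"
      using balanced_factorization[OF Y Z f(1,2)] truncation_mem_Linf[OF Z _ _ f(1,3) step] inc by blast
    then show "\<exists>g h. is_decr g \<and> g \<in> Y \<and> step_form g \<and> is_decr h \<and> h \<in> Z \<and> step_form h \<and>
        (\<forall>x>0. f x \<le> sqrt (g x) * sqrt (h x) \<and> h x \<le> g x)"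
      using step_majorants[OF Y Z _ _ _ _ step] by blast
  }
  {
    fix f assume inc: "Z \<inter> L1 \<subseteq> Y \<inter> L1" and "is_decr f \<and> f \<in> CL Y Z \<and> (\<forall>x>1. f x = 0)"
    then have f: "is_decr f" "f \<in> CL Y Z" "f \<in> borel_measurable M0" and supp: "\<And>x. 1 < x \<Longrightarrow> f x = 0"
      by (simp_all add: CL_def)
    obtain G H where "G \<in> Y" "is_decr G" "H \<in> Z" "is_decr H"
      and "\<And>x. 0 < x \<Longrightarrow> f x \<le> sqrt (G x) * sqrt (H x) \<and> H x \<le> G x"
      using balanced_factorization[OF Y Z f(1,2)] truncation_mem_L1[OF Z _ _ f(1,3) supp] inc by blast
    then show "\<exists>g h. is_decr g \<and> g \<in> Y \<and> is_decr h \<and> h \<in> Z \<and>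
        (\<forall>x>0. f x \<le> sqrt (g x) * sqrt (h x) \<and> h x \<le> g x)"
      by blast
  }
qed

end
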